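(* $\mathbf{FP}\subseteq\mathbf{FPC}$: every total function $f:\mathbb Z^m\to\mathbb Z$ computable by a deterministic Turing machine in time polynomial in the total binary length of its input is computed by some well-typed CorePolyC program.
   Context: CorePolyC. Types are $\mathtt{iint},\mathtt{int},\mathtt{bool}$; $\mathsf{Int}=\{\mathtt{iint},\mathtt{int}\}$, ordered by $\mathtt{iint}\preccurlyeq\mathtt{int}$. Values are unbounded integers ($\mathbb Z$) and booleans $\#t,\#f$. Expressions: variables $x$; constants (nonempty decimal digit strings denoting natural numbers; $\mathtt{true}$, $\mathtt{false}$); operator applications $\mathtt{op}(e_1,\dots,e_m)$; parenthesized $(e)$. Operators and semantics: unary $-$ (negation); binary $+,-,/,\%$ (integer addition, subtraction, division, remainder, with division and remainder by $0$ returning $0$); $\mathtt{size}$, with $\mathtt{size}(v)=\lceil\log_2(\mathrm{abs}(v)+1)\rceil$; comparisons $\texttt{>=},\texttt{<=},\texttt{>},\texttt{<},\texttt{==},\texttt{!=}$ on integers returning booleans; boolean $\texttt{!},\texttt{\&\&},\texttt{||}$. Statements: declaration $t\ x;$; assignment $x=e;$; block $\{s_1\dots s_m\}$; conditional $\mathbf{if}(e)\ s_1\ \mathbf{else}\ s_2$; loop $\mathbf{for}(x<\mathtt{size}(e))\ s$ (loop bounds are always syntactically of the form $\mathtt{size}(e)$). A program is $\mathbf{int\ main}(\mathbf{int}\ x_1,\dots,\mathbf{int}\ x_m)\{s_1\dots s_k\ \mathbf{return}\ e;\}$. Semantics (big-step). A store $\Sigma$ is a finite partial map from variables to values; $\Sigma[x\mapsto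 v]$ is the update. $\Sigma\vdash e\Downarrow v$: a variable $x\in\mathrm{dom}\,\Sigma$ evaluates to $\Sigma(x)$, constants to their value, $\mathtt{op}(e_1,\dots,e_m)$ to $\mathtt{op}$ applied to the values of the $e_i$. $\Sigma\vdash s\Downarrow\Sigma'$: $t\ x;$ gives $\Sigma[x\mapsto 0]$ if $t\in\mathsf{Int}$ and $\Sigma[x\mapsto\#f]$ if $t=\mathtt{bool}$; $x=e;$ (with $x\in\mathrm{dom}\,\Sigma$) gives $\Sigma[x\mapsto v]$ where $\Sigma\vdash e\Downarrow v$; a sequence or block executes its statements in order threading the store (a block returns the final store); a conditional evaluates its guard to a boolean and executes the corresponding branch; $\mathbf{for}(x<e)\ s$ evaluates $e$ once to an integer $i$, sets $\Sigma_0=\Sigma$, executes $s$ from $\Sigma_j[x\mapsto j]$ obtaining $\Sigma_{j+1}$ for $j=0,\dots,i-1$, and ends in $\Sigma_i$ (i.e. in $\Sigma$ if $i\le 0$). A program on inputs $v_1,\dots,v_m$ runs its statements from the store $[x_1\mapsto v_1,\dots,x_m\mapsto v_m]$ and outputs the value of its return expression in the resulting store. Type system. A typing environment $\Gamma$ is a finite partial map from variables to types; $\ell\in\{\#t,\#f\}$ is the loop indicator. Expression typing $\Gamma,\ell\vdash e:t$: a variable $x\in\mathrm{dom}\,\Gamma$ has type $\Gamma(x)$; digit literals have type $\mathtt{iint}$, $\mathtt{true},\mathtt{false}$ have type $\mathtt{bool}$; $\texttt{!},\texttt{\&\&},\texttt{||}$ take $\mathtt{bool}$ arguments to $\mathtt{bool}$;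 comparisons take arguments with types in $\mathsf{Int}$ to $\mathtt{bool}$; $+,-,/,\%$ take arguments with types in $\mathsf{Int}$ to their supremum under $\preccurlyeq$ ($\mathtt{iint}$ iff all arguments are $\mathtt{iint}$); $\mathtt{size}$ takes only an $\mathtt{iint}$ argument, giving $\mathtt{iint}$; parentheses preserve types. Statement typing $\Gamma,\ell\vdash s:\Gamma'$: $t\ x;$ is typable iff $x\notin\mathrm{dom}\,\Gamma$ and not($\ell=\#t$ and $t=\mathtt{iint}$), giving $\Gamma[x\mapsto t]$; $x=e;$ is typable iff $x\in\mathrm{dom}\,\Gamma$, not($\ell=\#t$ and $\Gamma(x)=\mathtt{iint}$), and $\Gamma,\ell\vdash e:t$ with $t,\Gamma(x)$ both in $\mathsf{Int}$ or both $\mathtt{bool}$, giving $\Gamma$; a sequence $s_1\dots s_m$ threads $\Gamma_0=\Gamma$, $\Gamma_{i-1},\ell\vdash s_i:\Gamma_i$, giving $\Gamma_m$; a block $\{\tilde s\}$ is typable if its sequence is, giving $\Gamma$; a conditional needs a guard of type $\mathtt{bool}$ and both branches typable under $\Gamma,\ell$, giving $\Gamma$; $\mathbf{for}(x<e)\ s$ needs $\Gamma,\ell\vdash e:\mathtt{iint}$, $x\notin\mathrm{dom}\,\Gamma$, and $\Gamma[x\mapsto\mathtt{iint}],\#t\vdash s:\Gamma'$ for some $\Gamma'$, giving $\Gamma$. A program is well-typed if its statements are typable starting from $[x_1\mapsto\mathtt{int},\dots,x_m\mapsto\mathtt{int}]$ with $\ell=\#f$, ending in some $\Gamma'$, and its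 return expression has a type in $\mathsf{Int}$ under $\Gamma',\#f$. A well-typed program $p$ with $m$ inputs computes a total function $[\![p]\!]:\mathbb Z^m\to\mathbb Z$; $\mathbf{FPC}$ is the set of all such functions. $\mathbf{FP}$ is the class of total functions $\mathbb Z^m\to\mathbb Z$ ($m\ge0$) computable by a deterministic Turing machine in time polynomial in the total binary length of the input. *)

theory Defs
  imports Complex_Main
begin

datatype ty = TIInt | TInt | TBool

definition is_int_ty :: "ty \<Rightarrow> bool" where
  "is_int_ty t \<longleftrightarrow> t = TIInt \<or> t = TInt"

datatype oper = Neg | Add | Sub | Div | Mod | Size
  | Ge | Le | Gt | Lt | Eq | Neq | Not | And | Or

datatype expr =
    Var string
  | NumLit nat            \<comment> \<open>a nonempty decimal digit string, represented by the natural it denotes\<close>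
  | TrueLit
  | FalseLit
  | App oper "expr list"
  | Paren expr

datatype stmt =
    Decl ty string
  | Assign string expr
  | Block "stmt list"
  | If expr stmt stmt
  | For string expr stmt  \<comment> \<open>For x e s  stands for  for(x < size(e)) s\<close>

record prog =
  params :: "string list"
  body   :: "stmt list"
  ret    :: expr

datatype val = VInt int | VBool bool

definition size_int :: "int \<Rightarrow> int" where
  "size_int v = \<lceil>log 2 (real_of_int (\<bar>v\<bar> + 1))\<rceil>"

text \<open>Integer division / remainder (C convention: truncation toward zero), with x/0 = x%0 = 0.\<close>
definition cdiv :: "int \<Rightarrow> int \<Rightarrow> int" where
  "cdiv a b = (if b = 0 then 0 else sgn a * sgn b * (\<bar>a\<bar> div \<bar>b\<bar>))"

definition cmod :: "int \<Rightarrow> int \<Rightarrow> int" where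
  "cmod a b = (if b = 0 then 0 else a - b * cdiv a b)"

definition int_bin :: "(int \<Rightarrow> int \<Rightarrow> val) \<Rightarrow> val list \<Rightarrow> val option" where
  "int_bin g vs = (case vs of [VInt a, VInt b] \<Rightarrow> Some (g a b) | _ \<Rightarrow> None)"

definition bool_bin :: "(bool \<Rightarrow> bool \<Rightarrow> bool) \<Rightarrow> val list \<Rightarrow> val option" where
  "bool_bin g vs = (case vs of [VBool a, VBool b] \<Rightarrow> Some (VBool (g a b)) | _ \<Rightarrow> None)"

fun apply_op :: "oper \<Rightarrow> val list \<Rightarrow> val option" where
  "apply_op Neg vs = (case vs of [VInt a] \<Rightarrow> Some (VInt (- a)) | _ \<Rightarrow> None)"
| "apply_op Add vs = int_bin (\<lambda>a b. VInt (a + b)) vs"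
| "apply_op Sub vs = int_bin (\<lambda>a b. VInt (a - b)) vs"
| "apply_op Div vs = int_bin (\<lambda>a b. VInt (cdiv a b)) vs"
| "apply_op Mod vs = int_bin (\<lambda>a b. VInt (cmod a b)) vs"
| "apply_op Size vs = (case vs of [VInt a] \<Rightarrow> Some (VInt (size_int a)) | _ \<Rightarrow> None)"
| "apply_op Ge vs = int_bin (\<lambda>a b. VBool (a \<ge> b)) vs"
| "apply_op Le vs = int_bin (\<lambda>a b. VBool (a \<le> b)) vs"
| "apply_op Gt vs = int_bin (\<lambda>a b. VBool (a > b)) vs"
| "apply_op Lt vs = int_bin (\<lambda>a b. VBool (a < b)) vs"
| "apply_op Eq vs = int_bin (\<lambda>a b. VBool (a = b)) vs"
| "apply_op Neq vs = int_bin (\<lambda>a b. VBool (a \<noteq> b)) vs"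
| "apply_op Not vs = (case vs of [VBool a] \<Rightarrow> Some (VBool (\<not> a)) | _ \<Rightarrow> None)"
| "apply_op And vs = bool_bin (\<and>) vs"
| "apply_op Or vs = bool_bin (\<or>) vs"

type_synonym store = "string \<Rightarrow> val option"

inductive eval :: "store \<Rightarrow> expr \<Rightarrow> val \<Rightarrow> bool" where
  eval_var: "\<Sigma> x = Some v \<Longrightarrow> eval \<Sigma> (Var x) v"
| eval_num: "eval \<Sigma> (NumLit n) (VInt (int n))"
| eval_true: "eval \<Sigma> TrueLit (VBool True)"
| eval_false: "eval \<Sigma> FalseLit (VBool False)"
| eval_app: "list_all2 (eval \<Sigma>) es vs \<Longrightarrow> apply_op f vs = Some v \<Longrightarrow> eval \<Sigma> (App f es) v"
| eval_paren: "eval \<Sigma> e v \<Longrightarrow> eval \<Sigma> (Paren e) v"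

inductive exec :: "store \<Rightarrow> stmt \<Rightarrow> store \<Rightarrow> bool"
  and exec_seq :: "store \<Rightarrow> stmt list \<Rightarrow> store \<Rightarrow> bool"
  and exec_loop :: "string \<Rightarrow> stmt \<Rightarrow> int \<Rightarrow> int \<Rightarrow> store \<Rightarrow> store \<Rightarrow> bool"
where
  exec_decl_int: "is_int_ty t \<Longrightarrow> exec \<Sigma> (Decl t x) (\<Sigma>(x \<mapsto> VInt 0))"
| exec_decl_bool: "exec \<Sigma> (Decl TBool x) (\<Sigma>(x \<mapsto> VBool False))"
| exec_assign: "x \<in> dom \<Sigma> \<Longrightarrow> eval \<Sigma> e v \<Longrightarrow> exec \<Sigma> (Assign x e) (\<Sigma>(x \<mapsto> v))"
| exec_block: "exec_seq \<Sigma> ss \<Sigma>' \<Longrightarrow> exec \<Sigma> (Block ss) \<Sigma>'"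
| exec_if_true: "eval \<Sigma> e (VBool True) \<Longrightarrow> exec \<Sigma> s1 \<Sigma>' \<Longrightarrow> exec \<Sigma> (If e s1 s2) \<Sigma>'"
| exec_if_false: "eval \<Sigma> e (VBool False) \<Longrightarrow> exec \<Sigma> s2 \<Sigma>' \<Longrightarrow> exec \<Sigma> (If e s1 s2) \<Sigma>'"
| exec_for: "eval \<Sigma> (App Size [e]) (VInt i) \<Longrightarrow> exec_loop x s 0 i \<Sigma> \<Sigma>'
             \<Longrightarrow> exec \<Sigma> (For x e s) \<Sigma>'"
| exec_seq_nil: "exec_seq \<Sigma> [] \<Sigma>"
| exec_seq_cons: "exec \<Sigma> s \<Sigma>1 \<Longrightarrow> exec_seq \<Sigma>1 ss \<Sigma>' \<Longrightarrow> exec_seq \<Sigma> (s # ss) \<Sigma>'"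
| exec_loop_done: "i \<le> j \<Longrightarrow> exec_loop x s j i \<Sigma> \<Sigma>"
| exec_loop_step: "j < i \<Longrightarrow> exec (\<Sigma>(x \<mapsto> VInt j)) s \<Sigma>1 \<Longrightarrow> exec_loop x s (j + 1) i \<Sigma>1 \<Sigma>'
                   \<Longrightarrow> exec_loop x s j i \<Sigma> \<Sigma>'"

type_synonym tenv = "string \<Rightarrow> ty option"

definition ty_sup :: "ty list \<Rightarrow> ty" where
  "ty_sup ts = (if list_all (\<lambda>t. t = TIInt) ts then TIInt else TInt)"

fun op_type :: "oper \<Rightarrow> ty list \<Rightarrow> ty option" where
  "op_type Not ts = (if ts = [TBool] then Some TBool else None)"
| "op_type And ts = (if ts = [TBool, TBool] then Some TBool else None)"
| "op_type Or ts = (if ts = [TBool, TBool] then Some TBool else None)"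
| "op_type Size ts = (if ts = [TIInt] then Some TIInt else None)"
| "op_type Neg ts = (if length ts = 1 \<and> list_all is_int_ty ts then Some (ty_sup ts) else None)"
| "op_type Add ts = (if length ts = 2 \<and> list_all is_int_ty ts then Some (ty_sup ts) else None)"
| "op_type Sub ts = (if length ts = 2 \<and> list_all is_int_ty ts then Some (ty_sup ts) else None)"
| "op_type Div ts = (if length ts = 2 \<and> list_all is_int_ty ts then Some (ty_sup ts) else None)"
| "op_type Mod ts = (if length ts = 2 \<and> list_all is_int_ty ts then Some (ty_sup ts) else None)"
| "op_type Ge ts = (if length ts = 2 \<and> list_all is_int_ty ts then Some TBool else None)"
| "op_type Le ts = (if length ts = 2 \<and> list_all is_int_ty ts then Some TBool else None)"
| "op_type Gt ts = (if length ts = 2 \<and> list_all is_int_ty ts then Some TBool else None)"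
| "op_type Lt ts = (if length ts = 2 \<and> list_all is_int_ty ts then Some TBool else None)"
| "op_type Eq ts = (if length ts = 2 \<and> list_all is_int_ty ts then Some TBool else None)"
| "op_type Neq ts = (if length ts = 2 \<and> list_all is_int_ty ts then Some TBool else None)"

text \<open>Expression typing; the loop indicator plays no role in expression typing.\<close>
inductive has_ty :: "tenv \<Rightarrow> expr \<Rightarrow> ty \<Rightarrow> bool" where
  ty_var: "\<Gamma> x = Some t \<Longrightarrow> has_ty \<Gamma> (Var x) t"
| ty_num: "has_ty \<Gamma> (NumLit n) TIInt"
| ty_true: "has_ty \<Gamma> TrueLit TBool"
| ty_false: "has_ty \<Gamma> FalseLit TBool"
| ty_app: "list_all2 (has_ty \<Gamma>) es ts \<Longrightarrow> op_type f ts = Some t \<Longrightarrow> has_ty \<Gamma> (App f es) t"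
| ty_paren: "has_ty \<Gamma> e t \<Longrightarrow> has_ty \<Gamma> (Paren e) t"

definition compatible :: "ty \<Rightarrow> ty \<Rightarrow> bool" where
  "compatible t t' \<longleftrightarrow> (is_int_ty t \<and> is_int_ty t') \<or> (t = TBool \<and> t' = TBool)"

inductive stmt_ty :: "tenv \<Rightarrow> bool \<Rightarrow> stmt \<Rightarrow> tenv \<Rightarrow> bool"
  and seq_ty :: "tenv \<Rightarrow> bool \<Rightarrow> stmt list \<Rightarrow> tenv \<Rightarrow> bool"
where
  sty_decl: "x \<notin> dom \<Gamma> \<Longrightarrow> \<not> (lp \<and> t = TIInt) \<Longrightarrow> stmt_ty \<Gamma> lp (Decl t x) (\<Gamma>(x \<mapsto> t))"
| sty_assign: "x \<in> dom \<Gamma> \<Longrightarrow> \<not> (lp \<and> \<Gamma> x = Some TIInt) \<Longrightarrow> has_ty \<Gamma> e t \<Longrightarrow>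
               compatible t (the (\<Gamma> x)) \<Longrightarrow> stmt_ty \<Gamma> lp (Assign x e) \<Gamma>"
| sty_block: "seq_ty \<Gamma> lp ss \<Gamma>' \<Longrightarrow> stmt_ty \<Gamma> lp (Block ss) \<Gamma>"
| sty_if: "has_ty \<Gamma> e TBool \<Longrightarrow> stmt_ty \<Gamma> lp s1 \<Gamma>1 \<Longrightarrow> stmt_ty \<Gamma> lp s2 \<Gamma>2 \<Longrightarrow>
           stmt_ty \<Gamma> lp (If e s1 s2) \<Gamma>"
| sty_for: "has_ty \<Gamma> (App Size [e]) TIInt \<Longrightarrow> x \<notin> dom \<Gamma> \<Longrightarrow>
            stmt_ty (\<Gamma>(x \<mapsto> TIInt)) True s \<Gamma>' \<Longrightarrow> stmt_ty \<Gamma> lp (For x e s) \<Gamma>"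
| sty_nil: "seq_ty \<Gamma> lp [] \<Gamma>"
| sty_cons: "stmt_ty \<Gamma> lp s \<Gamma>1 \<Longrightarrow> seq_ty \<Gamma>1 lp ss \<Gamma>' \<Longrightarrow> seq_ty \<Gamma> lp (s # ss) \<Gamma>'"

definition well_typed :: "prog \<Rightarrow> bool" where
  "well_typed p \<longleftrightarrow> distinct (params p) \<and>
     (\<exists>\<Gamma>' t. seq_ty (map_of (zip (params p) (replicate (length (params p)) TInt))) False (body p) \<Gamma>'
             \<and> has_ty \<Gamma>' (ret p) t \<and> is_int_ty t)"

definition prog_runs :: "prog \<Rightarrow> int list \<Rightarrow> val \<Rightarrow> bool" where
  "prog_runs p vs v \<longleftrightarrow> length vs = length (params p) \<and>
     (\<exists>\<Sigma>'. exec_seq (map_of (zip (params p) (map VInt vs))) (body p) \<Sigma>' \<and> eval \<Sigma>' (ret p) v)"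

text \<open>A function Z^m -> Z is represented as f :: int list => int, only its values on lists
  of length m being relevant.\<close>
definition prog_computes :: "prog \<Rightarrow> nat \<Rightarrow> (int list \<Rightarrow> int) \<Rightarrow> bool" where
  "prog_computes p m f \<longleftrightarrow> length (params p) = m \<and>
     (\<forall>vs. length vs = m \<longrightarrow> (\<forall>v. prog_runs p vs v \<longleftrightarrow> v = VInt (f vs)))"

definition in_FPC :: "nat \<Rightarrow> (int list \<Rightarrow> int) \<Rightarrow> bool" where
  "in_FPC m f \<longleftrightarrow> (\<exists>p. well_typed p \<and> prog_computes p m f)"

text \<open>Tape symbols are naturals below nsyms: 0 = blank, 1 = bit 0, 2 = bit 1, 3 = minus sign,
  4 = separator; further symbols are available to the machine.  States are naturals below nstates;
  0 is the start state, 1 the halting state.  Moves: -1 (left), 0 (stay), 1 (right).\<close>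
record tm =
  nstates :: nat
  nsyms :: nat
  delta :: "nat \<Rightarrow> nat \<Rightarrow> nat \<times> nat \<times> int"

definition valid_tm :: "tm \<Rightarrow> bool" where
  "valid_tm M \<longleftrightarrow> nstates M \<ge> 2 \<and> nsyms M \<ge> 5 \<and>
     (\<forall>q < nstates M. \<forall>a < nsyms M. case delta M q a of (q', a', d) \<Rightarrow>
        q' < nstates M \<and> a' < nsyms M \<and> d \<in> {-1, 0, 1})"

type_synonym config = "nat \<times> (int \<Rightarrow> nat) \<times> int"

fun tm_step :: "tm \<Rightarrow> config \<Rightarrow> config" where
  "tm_step M (q, tp, h) =
     (if q = 1 then (q, tp, h)
      else (case delta M q (tp h) of (q', a, d) \<Rightarrow> (q', tp(h := a), h + d)))"

definition tm_run :: "tm \<Rightarrow> nat \<Rightarrow> config \<Rightarrow> config" where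
  "tm_run M n c = (tm_step M ^^ n) c"

fun bits :: "nat \<Rightarrow> nat list" where
  "bits n = (if n < 2 then [n + 1] else bits (n div 2) @ [n mod 2 + 1])"

definition enc_int :: "int \<Rightarrow> nat list" where
  "enc_int v = (if v < 0 then [3] else []) @ bits (nat \<bar>v\<bar>)"

definition enc_input :: "int list \<Rightarrow> nat list" where
  "enc_input vs = concat (map (\<lambda>v. enc_int v @ [4]) vs)"

definition init_config :: "nat list \<Rightarrow> config" where
  "init_config w = (0, (\<lambda>i. if 0 \<le> i \<and> i < int (length w) then w ! nat i else 0), 0)"

definition tm_output_is :: "config \<Rightarrow> nat list \<Rightarrow> bool" where
  "tm_output_is c out \<longleftrightarrow> (case c of (q, tp, h) \<Rightarrow>
     q = 1 \<and> (\<forall>i < length out. tp (h + int i) = out ! i) \<and> tp (h + int (length out)) = 0)"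

definition in_FP :: "nat \<Rightarrow> (int list \<Rightarrow> int) \<Rightarrow> bool" where
  "in_FP m f \<longleftrightarrow> (\<exists>M c d. valid_tm M \<and>
     (\<forall>vs. length vs = m \<longrightarrow>
        (\<exists>t. t \<le> c * (length (enc_input vs) + 1) ^ d \<and>
             tm_output_is (tm_run M t (init_config (enc_input vs))) (enc_int (f vs)))))"

end

(*
  A machine M with B tape symbols is simulated step by step.  Its tape is held in two integers L
  and R whose base-B digits are the cells left of the head and from the head on, so reading,
  writing and moving the head are arithmetic on R mod B, R div B and B * R + a, and one step of M
  is a case distinction over the finitely many pairs of a state and a symbol.

  Loops only run size(e) times, but doubling and squaring build a clock z = 2 ^ E with
  E + 1 >= (E0 + 1) ^ (d + 1), where E0 bounds both c and the length n of the encoded input.  Hence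
  for(i < size(z)) runs at least c * (n + 1) ^ d steps of M, after which M has halted and further
  steps change nothing.  Before the loop the input is written into R, afterwards the output is read
  off R.  Loop bounds are iint variables assigned only outside loops, so the program is well typed.
*)

theory Submission
  imports Defs "HOL-Library.Log_Nat"
begin

fun eval_fun :: "store \<Rightarrow> expr \<Rightarrow> val option" where
  "eval_fun \<Sigma> (Var x) = \<Sigma> x"
| "eval_fun \<Sigma> (NumLit n) = Some (VInt (int n))"
| "eval_fun \<Sigma> TrueLit = Some (VBool True)"
| "eval_fun \<Sigma> FalseLit = Some (VBool False)"
| "eval_fun \<Sigma> (App f es) =
     (case those (map (eval_fun \<Sigma>) es) of Some vs \<Rightarrow> apply_op f vs | None \<Rightarrow> None)"
| "eval_fun \<Sigma> (Paren e) = eval_fun \<Sigma> e"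

lemma those_map_eq_Some_iff:
  "those (map g xs) = Some ys \<longleftrightarrow> list_all2 (\<lambda>x y. g x = Some y) xs ys"
  by (induction xs arbitrary: ys) (auto simp: list_all2_Cons1 split: option.splits)

lemma eval_iff_eval_fun: "eval \<Sigma> e v \<longleftrightarrow> eval_fun \<Sigma> e = Some v"
proof
  show "eval \<Sigma> e v \<Longrightarrow> eval_fun \<Sigma> e = Some v"
  proof (induction rule: eval.induct)
    case (eval_app \<Sigma> es vs f v)
    have "list_all2 (\<lambda>e v. eval_fun \<Sigma> e = Some v) es vs"
      using eval_app(1) by (rule list_all2_mono) auto
    then have "those (map (eval_fun \<Sigma>) es) = Some vs" by (simp add: those_map_eq_Some_iff)
    then show ?case using eval_app(2) by simp
  qed auto
  show "eval_fun \<Sigma> e = Some v \<Longrightarrow> eval \<Sigma> e v"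
  proof (induction e arbitrary: v)
    case (App f es)
    then obtain vs where vs: "list_all2 (\<lambda>e v. eval_fun \<Sigma> e = Some v) es vs" "apply_op f vs = Some v"
      by (auto simp: those_map_eq_Some_iff split: option.splits)
    have "list_all2 (eval \<Sigma>) es vs"
      using vs(1) by (rule list.rel_mono_strong) (use App.IH in auto)
    then show ?case using vs(2) by (rule eval_app)
  qed (auto intro: eval.intros)
qed

fun ty_fun :: "tenv \<Rightarrow> expr \<Rightarrow> ty option" where
  "ty_fun \<Gamma> (Var x) = \<Gamma> x"
| "ty_fun \<Gamma> (NumLit n) = Some TIInt"
| "ty_fun \<Gamma> TrueLit = Some TBool"
| "ty_fun \<Gamma> FalseLit = Some TBool"
| "ty_fun \<Gamma> (App f es) =
     (case those (map (ty_fun \<Gamma>) es) of Some ts \<Rightarrow> op_type f ts | None \<Rightarrow> None)"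
| "ty_fun \<Gamma> (Paren e) = ty_fun \<Gamma> e"

lemma has_ty_if_ty_fun: "ty_fun \<Gamma> e = Some t \<Longrightarrow> has_ty \<Gamma> e t"
proof (induction e arbitrary: t)
  case (App f es)
  then obtain ts where ts: "list_all2 (\<lambda>e t. ty_fun \<Gamma> e = Some t) es ts" "op_type f ts = Some t"
    by (auto simp: those_map_eq_Some_iff split: option.splits)
  have "list_all2 (has_ty \<Gamma>) es ts"
    using ts(1) by (rule list.rel_mono_strong) (use App.IH in auto)
  then show ?case using ts(2) by (rule ty_app)
qed (auto intro: has_ty.intros)

text \<open>Loop-free execution; loops are handled by the Hoare rule \<open>hoare_For\<close> below.\<close>

fun exec_fun :: "store \<Rightarrow> stmt \<Rightarrow> store option"
  and exec_seq_fun :: "store \<Rightarrow> stmt list \<Rightarrow> store option" where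
  "exec_fun \<Sigma> (Decl t x) = Some (\<Sigma>(x \<mapsto> (if t = TBool then VBool False else VInt 0)))"
| "exec_fun \<Sigma> (Assign x e) =
     (if x \<in> dom \<Sigma> then map_option (\<lambda>v. \<Sigma>(x \<mapsto> v)) (eval_fun \<Sigma> e) else None)"
| "exec_fun \<Sigma> (Block ss) = exec_seq_fun \<Sigma> ss"
| "exec_fun \<Sigma> (If e s1 s2) =
     (case eval_fun \<Sigma> e of
        Some (VBool b) \<Rightarrow> if b then exec_fun \<Sigma> s1 else exec_fun \<Sigma> s2
      | _ \<Rightarrow> None)"
| "exec_fun \<Sigma> (For x e s) = None"
| "exec_seq_fun \<Sigma> [] = Some \<Sigma>"
| "exec_seq_fun \<Sigma> (s # ss) = Option.bind (exec_fun \<Sigma> s) (\<lambda>\<Sigma>1. exec_seq_fun \<Sigma>1 ss)"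

lemma exec_if_exec_fun:
  "exec_fun \<Sigma> s = Some \<Sigma>' \<Longrightarrow> exec \<Sigma> s \<Sigma>'"
  "exec_seq_fun \<Sigma> ss = Some \<Sigma>' \<Longrightarrow> exec_seq \<Sigma> ss \<Sigma>'"
proof (induction \<Sigma> s and \<Sigma> ss arbitrary: \<Sigma>' and \<Sigma>' rule: exec_fun_exec_seq_fun.induct)
  case (1 \<Sigma> t x)
  then show ?case
    by (cases t) (auto intro: exec_decl_bool exec_decl_int simp: is_int_ty_def)
next
  case (4 \<Sigma> e s1 s2)
  then obtain b where "eval_fun \<Sigma> e = Some (VBool b)"
    by (auto split: option.splits val.splits)
  with 4 show ?case
    by (cases b) (auto intro: exec_if_true exec_if_false simp: eval_iff_eval_fun)
qed (auto intro: exec_exec_seq_exec_loop.intros simp: eval_iff_eval_fun bind_eq_Some_conv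
    split: if_splits)

lemma exec_seq_fun_append:
  "exec_seq_fun \<Sigma> (xs @ ys) = Option.bind (exec_seq_fun \<Sigma> xs) (\<lambda>\<Sigma>1. exec_seq_fun \<Sigma>1 ys)"
  by (induction xs arbitrary: \<Sigma>) (auto split: option.splits)


lemma exec_deterministic:
  "exec \<Sigma> s \<Sigma>1 \<Longrightarrow> exec \<Sigma> s \<Sigma>2 \<Longrightarrow> \<Sigma>1 = \<Sigma>2"
  "exec_seq \<Sigma> ss \<Sigma>1 \<Longrightarrow> exec_seq \<Sigma> ss \<Sigma>2 \<Longrightarrow> \<Sigma>1 = \<Sigma>2"
  "exec_loop x s j i \<Sigma> \<Sigma>1 \<Longrightarrow> exec_loop x s j i \<Sigma> \<Sigma>2 \<Longrightarrow> \<Sigma>1 = \<Sigma>2"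
proof (induction arbitrary: \<Sigma>2 and \<Sigma>2 and \<Sigma>2 rule: exec_exec_seq_exec_loop.inducts)
  case (exec_decl_int t \<Sigma> x)
  from exec_decl_int.prems show ?case
    by (cases rule: exec.cases) (use exec_decl_int in \<open>auto simp: is_int_ty_def\<close>)
next
  case (exec_decl_bool \<Sigma> x)
  from exec_decl_bool.prems show ?case by (cases rule: exec.cases) (auto simp: is_int_ty_def)
next
  case (exec_assign x \<Sigma> e v)
  from exec_assign.prems obtain v' where "eval \<Sigma> e v'" "\<Sigma>2 = \<Sigma>(x \<mapsto> v')"
    by (cases rule: exec.cases) auto
  then show ?case using exec_assign(2) by (simp add: eval_iff_eval_fun)
next
  case (exec_block \<Sigma> ss \<Sigma>')
  from exec_block.prems have "exec_seq \<Sigma> ss \<Sigma>2" by (cases rule: exec.cases) auto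
  then show ?case using exec_block.IH by blast
next
  case (exec_if_true \<Sigma> e s1 \<Sigma>' s2)
  from exec_if_true.prems have "exec \<Sigma> s1 \<Sigma>2 \<or> eval \<Sigma> e (VBool False)"
    by (cases rule: exec.cases) auto
  then show ?case using exec_if_true by (auto simp: eval_iff_eval_fun)
next
  case (exec_if_false \<Sigma> e s2 \<Sigma>' s1)
  from exec_if_false.prems have "exec \<Sigma> s2 \<Sigma>2 \<or> eval \<Sigma> e (VBool True)"
    by (cases rule: exec.cases) auto
  then show ?case using exec_if_false by (auto simp: eval_iff_eval_fun)
next
  case (exec_for \<Sigma> e i x s \<Sigma>')
  from exec_for.prems obtain i'
    where "eval \<Sigma> (App Size [e]) (VInt i')" "exec_loop x s 0 i' \<Sigma> \<Sigma>2"
    by (cases rule: exec.cases) auto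
  moreover have "i' = i" using calculation(1) exec_for(1) by (simp add: eval_iff_eval_fun)
  ultimately show ?case using exec_for.IH by blast
next
  case (exec_seq_nil \<Sigma>)
  then show ?case by (cases rule: exec_seq.cases) auto
next
  case (exec_seq_cons \<Sigma> s \<Sigma>1 ss \<Sigma>')
  from exec_seq_cons.prems obtain \<Sigma>1' where "exec \<Sigma> s \<Sigma>1'" "exec_seq \<Sigma>1' ss \<Sigma>2"
    by (cases rule: exec_seq.cases) auto
  moreover have "\<Sigma>1' = \<Sigma>1" using calculation(1) exec_seq_cons.IH(1) by metis
  ultimately show ?case using exec_seq_cons.IH(2) by blast
next
  case (exec_loop_done i j x s \<Sigma>)
  from exec_loop_done.prems show ?case
    by (cases rule: exec_loop.cases) (use exec_loop_done in auto)
next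
  case (exec_loop_step j i \<Sigma> x s \<Sigma>1 \<Sigma>')
  from exec_loop_step.prems obtain \<Sigma>1'
    where "exec (\<Sigma>(x \<mapsto> VInt j)) s \<Sigma>1'" "exec_loop x s (j + 1) i \<Sigma>1' \<Sigma>2"
    using exec_loop_step(1) by (cases rule: exec_loop.cases) auto
  moreover have "\<Sigma>1' = \<Sigma>1" using calculation(1) exec_loop_step.IH(1) by metis
  ultimately show ?case using exec_loop_step.IH(2) by blast
qed

lemma prog_computes_if_runs:
  assumes "length (params p) = m" "ret p = Var x"
    and "\<And>vs. length vs = m \<Longrightarrow>
      \<exists>\<Sigma>'. exec_seq (map_of (zip (params p) (map VInt vs))) (body p) \<Sigma>' \<and> \<Sigma>' x = Some (VInt (f vs))"
  shows "prog_computes p m f"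
  unfolding prog_computes_def
proof (intro conjI allI impI)
  fix vs :: "int list" and v assume len: "length vs = m"
  then obtain \<Sigma>' where run: "exec_seq (map_of (zip (params p) (map VInt vs))) (body p) \<Sigma>'"
    and x: "\<Sigma>' x = Some (VInt (f vs))" using assms(3) by blast
  have "prog_runs p vs v \<longleftrightarrow> eval \<Sigma>' (ret p) v"
  proof
    assume "prog_runs p vs v"
    then obtain \<Sigma>'' where "exec_seq (map_of (zip (params p) (map VInt vs))) (body p) \<Sigma>''"
      and "eval \<Sigma>'' (ret p) v" unfolding prog_runs_def by blast
    with exec_deterministic(2)[OF run] show "eval \<Sigma>' (ret p) v" by metis
  next
    assume "eval \<Sigma>' (ret p) v"
    with run len assms(1) show "prog_runs p vs v" unfolding prog_runs_def by auto
  qed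
  then show "prog_runs p vs v \<longleftrightarrow> v = VInt (f vs)"
    using x assms(2) by (auto simp: eval_iff_eval_fun)
qed (fact assms(1))

fun assigned_vars :: "stmt \<Rightarrow> string set" where
  "assigned_vars (Decl t x) = {x}"
| "assigned_vars (Assign x e) = {x}"
| "assigned_vars (Block ss) = (\<Union>s\<in>set ss. assigned_vars s)"
| "assigned_vars (If e s1 s2) = assigned_vars s1 \<union> assigned_vars s2"
| "assigned_vars (For x e s) = insert x (assigned_vars s)"

abbreviation assigned_vars_seq :: "stmt list \<Rightarrow> string set" where
  "assigned_vars_seq ss \<equiv> \<Union>s\<in>set ss. assigned_vars s"

lemma exec_unassigned:
  "exec \<Sigma> s \<Sigma>' \<Longrightarrow> x \<notin> assigned_vars s \<Longrightarrow> \<Sigma>' x = \<Sigma> x"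
  "exec_seq \<Sigma> ss \<Sigma>' \<Longrightarrow> x \<notin> assigned_vars_seq ss \<Longrightarrow> \<Sigma>' x = \<Sigma> x"
  "exec_loop y s j i \<Sigma> \<Sigma>' \<Longrightarrow> x \<notin> insert y (assigned_vars s) \<Longrightarrow> \<Sigma>' x = \<Sigma> x"
  by (induction rule: exec_exec_seq_exec_loop.inducts) auto

lemma exec_dom_mono:
  "exec \<Sigma> s \<Sigma>' \<Longrightarrow> dom \<Sigma> \<subseteq> dom \<Sigma>'"
  "exec_seq \<Sigma> ss \<Sigma>' \<Longrightarrow> dom \<Sigma> \<subseteq> dom \<Sigma>'"
  "exec_loop y s j i \<Sigma> \<Sigma>' \<Longrightarrow> dom \<Sigma> \<subseteq> dom \<Sigma>'"
proof (induction rule: exec_exec_seq_exec_loop.inducts)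
  case (exec_loop_step j i \<Sigma> x s \<Sigma>1 \<Sigma>')
  have "dom \<Sigma> \<subseteq> dom (\<Sigma>(x \<mapsto> VInt j))" by auto
  then show ?case using exec_loop_step.IH by blast
qed auto

lemma exec_seq_append:
  "exec_seq \<Sigma> xs \<Sigma>1 \<Longrightarrow> exec_seq \<Sigma>1 ys \<Sigma>2 \<Longrightarrow> exec_seq \<Sigma> (xs @ ys) \<Sigma>2"
proof (induction xs arbitrary: \<Sigma>)
  case Nil
  then show ?case by (cases rule: exec_seq.cases) auto
next
  case (Cons a xs)
  from Cons.prems(1) obtain \<Sigma>a where "exec \<Sigma> a \<Sigma>a" "exec_seq \<Sigma>a xs \<Sigma>1"
    by (cases rule: exec_seq.cases) auto
  then show ?case using Cons by (auto intro: exec_seq_cons)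
qed

text \<open>The domain clause holds for every execution (\<open>exec_dom_mono\<close>); it lets \<open>G\<close> require
  variables to be declared.\<close>

definition preserved_outside :: "string set \<Rightarrow> (store \<Rightarrow> bool) \<Rightarrow> bool" where
  "preserved_outside X G \<longleftrightarrow>
     (\<forall>\<Sigma> \<Sigma>'. G \<Sigma> \<longrightarrow> (\<forall>x. x \<notin> X \<longrightarrow> \<Sigma>' x = \<Sigma> x) \<longrightarrow> dom \<Sigma> \<subseteq> dom \<Sigma>' \<longrightarrow> G \<Sigma>')"

lemma preserved_outside_conj:
  "preserved_outside X G \<Longrightarrow> preserved_outside X H \<Longrightarrow> preserved_outside X (\<lambda>\<Sigma>. G \<Sigma> \<and> H \<Sigma>)"
  unfolding preserved_outside_def by blast

lemma preserved_outside_var_eq: "x \<notin> X \<Longrightarrow> preserved_outside X (\<lambda>\<Sigma>. \<Sigma> x = v)"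
  unfolding preserved_outside_def by auto


lemma size_int_eq_floorlog: "size_int v = int (floorlog 2 (nat \<bar>v\<bar>))"
proof (cases "v = 0")
  case True
  then show ?thesis by (simp add: size_int_def floorlog_def)
next
  case False
  define n where "n = nat \<bar>v\<bar>"
  have "floorlog 2 n \<noteq> 0" using False by (simp add: n_def floorlog_eq_zero_iff)
  then obtain k where k: "floorlog 2 n = Suc k" using not0_implies_Suc by blast
  have "n > 0" using False by (simp add: n_def)
  with floorlog_bounds[of n 2] k have b: "2 ^ k \<le> n" "n < 2 ^ Suc k" by auto
  have "real k < log 2 (real (n + 1))" using b by (intro less_log2_of_power) auto
  moreover have "log 2 (real (n + 1)) \<le> real (Suc k)" using b by (intro log2_of_power_le) auto
  ultimately have "\<lceil>log 2 (real (n + 1))\<rceil> = int (Suc k)" by (intro ceiling_unique) auto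
  moreover have "real_of_int (\<bar>v\<bar> + 1) = real (n + 1)" by (simp add: n_def)
  ultimately have "\<lceil>log 2 (real_of_int (\<bar>v\<bar> + 1))\<rceil> = int (Suc k)" by (simp add: add.commute)
  then show ?thesis unfolding size_int_def k[unfolded n_def] .
qed

lemma floorlog_2_power: "floorlog 2 (2 ^ E) = Suc E"
  using floorlog_power[of 1 2 E] by (simp add: compute_floorlog)


declare bits.simps [simp del]

lemma bits_less_2: "n < 2 \<Longrightarrow> bits n = [n + 1]"
  by (subst bits.simps) simp

lemma bits_ge_2: "2 \<le> n \<Longrightarrow> bits n = bits (n div 2) @ [n mod 2 + 1]"
  by (subst bits.simps) simp

lemma bits_digits: "set (bits n) \<subseteq> {1, 2}"
proof (induction n rule: less_induct)
  case (less n)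
  then show ?case by (cases "n < 2") (auto simp: bits_less_2 bits_ge_2)
qed

lemma bits_not_Nil: "bits n \<noteq> []"
  by (cases "n < 2") (auto simp: bits_less_2 bits_ge_2)

lemma length_bits: "length (bits n) \<le> floorlog 2 n + 1"
proof (induction n rule: less_induct)
  case (less n)
  show ?case
  proof (cases "n < 2")
    case False
    then have "length (bits n) = length (bits (n div 2)) + 1"
      and "floorlog 2 n = floorlog 2 (n div 2) + 1"
      by (simp_all add: bits_ge_2 compute_floorlog[of 2 n])
    then show ?thesis using less.IH[of "n div 2"] False by simp
  qed (simp add: bits_less_2)
qed


definition bits_value :: "nat list \<Rightarrow> int" where
  "bits_value xs = foldl (\<lambda>acc a. 2 * acc + (int a - 1)) 0 xs"

lemma bits_value_snoc: "bits_value (xs @ [a]) = 2 * bits_value xs + (int a - 1)"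
  by (simp add: bits_value_def)

lemma bits_value_bits: "bits_value (bits n) = int n"
proof (induction n rule: less_induct)
  case (less n)
  show ?case
  proof (cases "n < 2")
    case True
    then show ?thesis by (simp add: bits_less_2 bits_value_def)
  next
    case False
    then have "bits_value (bits n) = 2 * int (n div 2) + int (n mod 2)"
      using less.IH[of "n div 2"] by (simp add: bits_ge_2 bits_value_snoc)
    also have "\<dots> = int n"
      using div_mult_mod_eq[of n 2] by (metis of_nat_add of_nat_mult of_nat_numeral mult.commute)
    finally show ?thesis .
  qed
qed

section \<open>A Hoare logic of total correctness\<close>

definition hoare :: "(store \<Rightarrow> bool) \<Rightarrow> stmt \<Rightarrow> (store \<Rightarrow> bool) \<Rightarrow> bool" where
  "hoare P s Q \<longleftrightarrow> (\<forall>\<Sigma>. P \<Sigma> \<longrightarrow> (\<exists>\<Sigma>'. exec \<Sigma> s \<Sigma>' \<and> Q \<Sigma>'))"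

definition hoare_seq :: "(store \<Rightarrow> bool) \<Rightarrow> stmt list \<Rightarrow> (store \<Rightarrow> bool) \<Rightarrow> bool" where
  "hoare_seq P ss Q \<longleftrightarrow> (\<forall>\<Sigma>. P \<Sigma> \<longrightarrow> (\<exists>\<Sigma>'. exec_seq \<Sigma> ss \<Sigma>' \<and> Q \<Sigma>'))"

lemma hoare_seq_Nil: "(\<And>\<Sigma>. P \<Sigma> \<Longrightarrow> Q \<Sigma>) \<Longrightarrow> hoare_seq P [] Q"
  unfolding hoare_seq_def by (auto intro: exec_seq_nil)

lemma hoare_seq_Cons: "hoare P s Q \<Longrightarrow> hoare_seq Q ss R \<Longrightarrow> hoare_seq P (s # ss) R"
  unfolding hoare_seq_def hoare_def using exec_seq_cons by blast

lemma hoare_seq_single: "hoare P s Q \<Longrightarrow> hoare_seq P [s] Q"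
  by (rule hoare_seq_Cons, assumption, rule hoare_seq_Nil)

lemma hoare_seq_append: "hoare_seq P xs Q \<Longrightarrow> hoare_seq Q ys R \<Longrightarrow> hoare_seq P (xs @ ys) R"
  unfolding hoare_seq_def using exec_seq_append by blast

lemma hoare_conseq:
  "hoare P s Q \<Longrightarrow> (\<And>\<Sigma>. P' \<Sigma> \<Longrightarrow> P \<Sigma>) \<Longrightarrow> (\<And>\<Sigma>. Q \<Sigma> \<Longrightarrow> Q' \<Sigma>) \<Longrightarrow> hoare P' s Q'"
  unfolding hoare_def by blast

lemma hoare_seq_conseq:
  "hoare_seq P ss Q \<Longrightarrow> (\<And>\<Sigma>. P' \<Sigma> \<Longrightarrow> P \<Sigma>) \<Longrightarrow> (\<And>\<Sigma>. Q \<Sigma> \<Longrightarrow> Q' \<Sigma>) \<Longrightarrow>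
   hoare_seq P' ss Q'"
  unfolding hoare_seq_def by blast

lemma hoare_by_exec_fun:
  "(\<And>\<Sigma>. P \<Sigma> \<Longrightarrow> \<exists>\<Sigma>'. exec_fun \<Sigma> s = Some \<Sigma>' \<and> Q \<Sigma>') \<Longrightarrow> hoare P s Q"
  unfolding hoare_def using exec_if_exec_fun(1) by blast

lemma hoare_seq_by_exec_seq_fun:
  "(\<And>\<Sigma>. P \<Sigma> \<Longrightarrow> \<exists>\<Sigma>'. exec_seq_fun \<Sigma> ss = Some \<Sigma>' \<and> Q \<Sigma>') \<Longrightarrow> hoare_seq P ss Q"
  unfolding hoare_seq_def using exec_if_exec_fun(2) by blast

lemma hoare_frame:
  "hoare P s Q \<Longrightarrow> preserved_outside (assigned_vars s) G \<Longrightarrow>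
   hoare (\<lambda>\<Sigma>. P \<Sigma> \<and> G \<Sigma>) s (\<lambda>\<Sigma>. Q \<Sigma> \<and> G \<Sigma>)"
  unfolding hoare_def preserved_outside_def using exec_unassigned(1) exec_dom_mono(1) by metis

lemma hoare_seq_frame:
  "hoare_seq P ss Q \<Longrightarrow> preserved_outside (assigned_vars_seq ss) G \<Longrightarrow>
   hoare_seq (\<lambda>\<Sigma>. P \<Sigma> \<and> G \<Sigma>) ss (\<lambda>\<Sigma>. Q \<Sigma> \<and> G \<Sigma>)"
  unfolding hoare_seq_def preserved_outside_def using exec_unassigned(2) exec_dom_mono(2) by metis

lemma exec_loop_invariant:
  assumes step: "\<And>k \<Sigma> j. I k \<Sigma> \<Longrightarrow> \<exists>\<Sigma>'. exec (\<Sigma>(x \<mapsto> VInt j)) s \<Sigma>' \<and> I (Suc k) \<Sigma>'"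
  shows "I k \<Sigma> \<Longrightarrow> \<exists>\<Sigma>'. exec_loop x s j i \<Sigma> \<Sigma>' \<and> I (k + nat (i - j)) \<Sigma>'"
proof (induction "nat (i - j)" arbitrary: k \<Sigma> j)
  case 0
  then show ?case by (auto intro: exec_loop_done)
next
  case (Suc n)
  from step[OF Suc.prems] obtain \<Sigma>1
    where \<Sigma>1: "exec (\<Sigma>(x \<mapsto> VInt j)) s \<Sigma>1" "I (Suc k) \<Sigma>1" by blast
  have "n = nat (i - (j + 1))" using Suc.hyps(2) by simp
  from Suc.hyps(1)[OF this \<Sigma>1(2)] obtain \<Sigma>'
    where "exec_loop x s (j + 1) i \<Sigma>1 \<Sigma>'" "I (Suc k + nat (i - (j + 1))) \<Sigma>'" by blast
  moreover have "j < i" "Suc k + nat (i - (j + 1)) = k + nat (i - j)" using Suc.hyps(2) by auto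
  ultimately show ?case using \<Sigma>1(1) by (metis exec_loop_step)
qed

lemma hoare_For:
  assumes "\<And>\<Sigma>. P \<Sigma> \<Longrightarrow> eval_fun \<Sigma> e = Some (VInt n) \<and> I 0 \<Sigma>"
    and "\<And>k \<Sigma> j. I k \<Sigma> \<Longrightarrow> \<exists>\<Sigma>'. exec (\<Sigma>(x \<mapsto> VInt j)) s \<Sigma>' \<and> I (Suc k) \<Sigma>'"
  shows "hoare P (For x e s) (I (floorlog 2 (nat \<bar>n\<bar>)))"
  unfolding hoare_def
proof (intro allI impI)
  fix \<Sigma> assume "P \<Sigma>"
  then have e: "eval \<Sigma> (App Size [e]) (VInt (size_int n))" and "I 0 \<Sigma>"
    using assms(1) by (auto simp: eval_iff_eval_fun)
  from exec_loop_invariant[of I x s, OF assms(2) this(2), of 0 "size_int n"] obtain \<Sigma>'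
    where "exec_loop x s 0 (size_int n) \<Sigma> \<Sigma>'" "I (nat (size_int n)) \<Sigma>'" by auto
  with e show "\<exists>\<Sigma>'. exec \<Sigma> (For x e s) \<Sigma>' \<and> I (floorlog 2 (nat \<bar>n\<bar>)) \<Sigma>'"
    by (auto intro: exec_for simp: size_int_eq_floorlog)
qed


section \<open>Turing machine tapes as pairs of numbers\<close>

definition digit :: "int \<Rightarrow> int \<Rightarrow> nat \<Rightarrow> int" where
  "digit B X k = X div B ^ k mod B"

lemma digit_0 [simp]: "digit B X 0 = X mod B"
  by (simp add: digit_def)

lemma digit_Suc: "B > 0 \<Longrightarrow> digit B X (Suc k) = digit B (X div B) k"
  by (simp add: digit_def zdiv_zmult2_eq mult.commute)

lemma digit_push:
  "0 \<le> a \<Longrightarrow> a < B \<Longrightarrow> digit B (B * X + a) k = (if k = 0 then a else digit B X (k - 1))"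
  by (cases k) (simp_all add: digit_Suc)

lemma digit_nonzero_less_floorlog:
  assumes "2 \<le> B" "0 \<le> X" "digit (int B) X k \<noteq> 0"
  shows "k < floorlog 2 (nat X)"
proof -
  have "X div int B ^ k \<noteq> 0" using assms(3) by (auto simp: digit_def)
  then have "int B ^ k \<le> X"
    using assms(2) by (meson div_pos_pos_trivial not_le zero_le_power of_nat_0_le_iff)
  moreover have "(2::int) ^ k \<le> int B ^ k" using assms(1) by (simp add: power_mono)
  ultimately have "2 ^ k \<le> nat X" by (simp add: le_nat_iff)
  then show ?thesis by (simp add: floorlog_ge_SucI Suc_le_eq[symmetric])
qed

text \<open>The cells \<open>h, h + 1, \<dots>\<close> hold the base-\<open>B\<close> digits of \<open>R\<close> and the cells
  \<open>h - 1, h - 2, \<dots>\<close> those of \<open>L\<close>, least significant digit next to the head.\<close>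

definition tape_repr :: "int \<Rightarrow> (int \<Rightarrow> nat) \<Rightarrow> int \<Rightarrow> int \<Rightarrow> int \<Rightarrow> bool" where
  "tape_repr B tp h L R \<longleftrightarrow>
     (\<forall>k. int (tp (h + int k)) = digit B R k \<and> int (tp (h - 1 - int k)) = digit B L k)"

lemma tape_repr_head: "tape_repr B tp h L R \<Longrightarrow> int (tp h) = R mod B"
  unfolding tape_repr_def by (metis add_0_right digit_0 of_nat_0)

lemma tape_repr_write:
  assumes "tape_repr B tp h L R" "0 \<le> a" "a < B"
  shows "tape_repr B (tp(h := nat a)) h L (B * (R div B) + a)"
  unfolding tape_repr_def
proof
  fix k
  have "int ((tp(h := nat a)) (h + int k)) = digit B (B * (R div B) + a) k"
  proof (cases k)
    case (Suc k')
    have "int (tp (h + int (Suc k'))) = digit B R (Suc k')"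
      using assms(1) unfolding tape_repr_def by blast
    then show ?thesis using Suc assms(2,3) by (simp add: digit_push digit_Suc)
  qed (use assms in auto)
  moreover have "int ((tp(h := nat a)) (h - 1 - int k)) = digit B L k"
    using assms(1) unfolding tape_repr_def by simp
  ultimately show "int ((tp(h := nat a)) (h + int k)) = digit B (B * (R div B) + a) k \<and>
      int ((tp(h := nat a)) (h - 1 - int k)) = digit B L k" ..
qed

lemma tape_repr_move_right:
  assumes "tape_repr B tp h L R" "B > 0"
  shows "tape_repr B tp (h + 1) (B * L + R mod B) (R div B)"
  unfolding tape_repr_def
proof
  fix k
  have "int (tp (h + 1 + int k)) = digit B R (Suc k)"
    using assms(1) unfolding tape_repr_def by (metis add.assoc of_nat_Suc add.commute)
  moreover have "int (tp (h + 1 - 1 - int k)) = digit B (B * L + R mod B) k"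
  proof (cases k)
    case 0
    then show ?thesis using tape_repr_head[OF assms(1)] assms(2) by (simp add: digit_push)
  next
    case (Suc k')
    have "int (tp (h - 1 - int k')) = digit B L k'"
      using assms(1) unfolding tape_repr_def by blast
    then show ?thesis using Suc assms(2) by (simp add: digit_push algebra_simps)
  qed
  ultimately show "int (tp (h + 1 + int k)) = digit B (R div B) k \<and>
      int (tp (h + 1 - 1 - int k)) = digit B (B * L + R mod B) k"
    using assms(2) by (simp add: digit_Suc)
qed

lemma tape_repr_move_left:
  assumes "tape_repr B tp h L R" "B > 0"
  shows "tape_repr B tp (h - 1) (L div B) (B * R + L mod B)"
  unfolding tape_repr_def
proof
  fix k
  have "int (tp (h - 1 + int k)) = digit B (B * R + L mod B) k"
  proof (cases k)
    case 0
    have "int (tp (h - 1 - int 0)) = digit B L 0" using assms(1) unfolding tape_repr_def by blast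
    then show ?thesis using 0 assms(2) by (simp add: digit_push)
  next
    case (Suc k')
    have "int (tp (h + int k')) = digit B R k'" using assms(1) unfolding tape_repr_def by blast
    then show ?thesis using Suc assms(2) by (simp add: digit_push)
  qed
  moreover have "int (tp (h - 1 - 1 - int k)) = digit B L (Suc k)"
    using assms(1) unfolding tape_repr_def by (metis diff_diff_eq of_nat_Suc add.commute)
  ultimately show "int (tp (h - 1 + int k)) = digit B (B * R + L mod B) k \<and>
      int (tp (h - 1 - 1 - int k)) = digit B (L div B) k"
    using assms(2) by (simp add: digit_Suc)
qed


section \<open>Simulating one step of a Turing machine\<close>

abbreviation "eAdd a b \<equiv> App Add [a, b]"
abbreviation "eSub a b \<equiv> App Sub [a, b]"
abbreviation "eDiv a b \<equiv> App Div [a, b]"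
abbreviation "eMod a b \<equiv> App Mod [a, b]"
abbreviation "eEq a b \<equiv> App Eq [a, b]"
abbreviation "eNeq a b \<equiv> App Neq [a, b]"
abbreviation "eLt a b \<equiv> App Lt [a, b]"
abbreviation "eAnd a b \<equiv> App And [a, b]"

text \<open>CorePolyC has no multiplication; multiplication by a constant is repeated addition.\<close>

fun times_const :: "nat \<Rightarrow> expr \<Rightarrow> expr" where
  "times_const 0 e = NumLit 0"
| "times_const (Suc n) e = eAdd e (times_const n e)"

lemma eval_fun_times_const:
  "0 < n \<Longrightarrow> eval_fun \<Sigma> (times_const n e) =
     (case eval_fun \<Sigma> e of Some (VInt v) \<Rightarrow> Some (VInt (int n * v)) | _ \<Rightarrow> None)"
proof (induction n)
  case (Suc n)
  then show ?case
    by (cases "n = 0") (auto simp: int_bin_def algebra_simps split: option.splits val.splits)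
qed simp

lemma ty_fun_times_const:
  "0 < n \<Longrightarrow> ty_fun \<Gamma> (times_const n e) =
     (case ty_fun \<Gamma> e of Some t \<Rightarrow> if is_int_ty t then Some t else None | None \<Rightarrow> None)"
proof (induction n)
  case (Suc n)
  then show ?case
    by (cases "n = 0") (auto simp: ty_sup_def is_int_ty_def split: option.splits)
qed simp

lemma cdiv_nonneg: "0 \<le> a \<Longrightarrow> 0 < b \<Longrightarrow> cdiv a b = a div b"
  by (auto simp: cdiv_def sgn_if)

lemma cmod_nonneg: "0 \<le> a \<Longrightarrow> 0 < b \<Longrightarrow> cmod a b = a mod b"
  by (auto simp: cmod_def cdiv_nonneg minus_div_mult_eq_mod[symmetric] algebra_simps)

definition simulates :: "tm \<Rightarrow> config \<Rightarrow> store \<Rightarrow> bool" where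
  "simulates M c \<Sigma> \<longleftrightarrow> (case c of (q, tp, h) \<Rightarrow>
     q < nstates M \<and> \<Sigma> ''q'' = Some (VInt (int q)) \<and>
     (\<exists>L R. \<Sigma> ''L'' = Some (VInt L) \<and> \<Sigma> ''R'' = Some (VInt R) \<and> 0 \<le> L \<and> 0 \<le> R \<and>
        tape_repr (int (nsyms M)) tp h L R))"

lemma simulates_upd: "x \<notin> {''q'', ''L'', ''R''} \<Longrightarrow> simulates M c (\<Sigma>(x \<mapsto> v)) = simulates M c \<Sigma>"
  unfolding simulates_def by (cases c) auto

definition write_stmts :: "nat \<Rightarrow> nat \<Rightarrow> nat \<Rightarrow> stmt list" where
  "write_stmts a a' q' = [Assign ''R'' (eAdd (eSub (Var ''R'') (NumLit a)) (NumLit a')),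
     Assign ''q'' (NumLit q')]"

definition move_stmts :: "nat \<Rightarrow> int \<Rightarrow> stmt list" where
  "move_stmts B d =
     (if d = 1 then
        [Assign ''L'' (eAdd (times_const B (Var ''L'')) (eMod (Var ''R'') (NumLit B))),
         Assign ''R'' (eDiv (Var ''R'') (NumLit B))]
      else if d = -1 then
        [Assign ''R'' (eAdd (times_const B (Var ''R'')) (eMod (Var ''L'') (NumLit B))),
         Assign ''L'' (eDiv (Var ''L'') (NumLit B))]
      else [])"

definition action_stmt :: "tm \<Rightarrow> nat \<Rightarrow> nat \<Rightarrow> stmt" where
  "action_stmt M q a =
     (case delta M q a of (q', a', d) \<Rightarrow> Block (write_stmts a a' q' @ move_stmts (nsyms M) d))"

text \<open>The scanned symbol is \<open>R mod B\<close>, so a step is a case distinction over all pairs of a state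
  and a symbol.\<close>

fun dispatch :: "tm \<Rightarrow> (nat \<times> nat) list \<Rightarrow> stmt" where
  "dispatch M [] = Block []"
| "dispatch M ((q, a) # ps) =
     If (eAnd (eEq (Var ''q'') (NumLit q)) (eEq (eMod (Var ''R'') (NumLit (nsyms M))) (NumLit a)))
       (action_stmt M q a) (dispatch M ps)"

definition step_stmt :: "tm \<Rightarrow> stmt" where
  "step_stmt M = If (eEq (Var ''q'') (NumLit 1)) (Block [])
     (dispatch M (List.product [0..<nstates M] [0..<nsyms M]))"

lemma valid_tm_delta:
  "valid_tm M \<Longrightarrow> q < nstates M \<Longrightarrow> a < nsyms M \<Longrightarrow> delta M q a = (q', a', d) \<Longrightarrow>
   q' < nstates M \<and> a' < nsyms M \<and> d \<in> {-1, 0, 1}"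
  unfolding valid_tm_def by fastforce

lemma valid_tm_nsyms: "valid_tm M \<Longrightarrow> 5 \<le> nsyms M"
  unfolding valid_tm_def by simp

lemma simulates_head:
  assumes "valid_tm M" "simulates M (q, tp, h) \<Sigma>"
  shows "tp h < nsyms M"
proof -
  obtain L R where "tape_repr (int (nsyms M)) tp h L R"
    using assms(2) unfolding simulates_def by auto
  then have "int (tp h) = R mod int (nsyms M)" by (rule tape_repr_head)
  moreover have "0 < int (nsyms M)" using valid_tm_nsyms[OF assms(1)] by simp
  ultimately show ?thesis by (metis of_nat_less_iff pos_mod_bound)
qed

lemma exec_write_stmts:
  assumes M: "valid_tm M" and sim: "simulates M (q, tp, h) \<Sigma>"
    and q': "q' < nstates M" and a': "a' < nsyms M"
  shows "\<exists>\<Sigma>'. exec_seq_fun \<Sigma> (write_stmts (tp h) a' q') = Some \<Sigma>' \<and>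
    simulates M (q', tp(h := a'), h) \<Sigma>'"
proof -
  define B where "B = int (nsyms M)"
  obtain L R where LR: "\<Sigma> ''L'' = Some (VInt L)" "\<Sigma> ''R'' = Some (VInt R)" "0 \<le> L" "0 \<le> R"
    and tape: "tape_repr B tp h L R" and dom_q: "''q'' \<in> dom \<Sigma>"
    using sim unfolding simulates_def B_def by auto
  have B: "0 < B" using valid_tm_nsyms[OF M] by (simp add: B_def)
  have "R - int (tp h) + int a' = B * (R div B) + int a'"
    using tape_repr_head[OF tape] by (simp add: algebra_simps)
  moreover have "tape_repr B (tp(h := a')) h L (B * (R div B) + int a')"
    using tape_repr_write[OF tape, of "int a'"] a' by (simp add: B_def)
  moreover have "0 \<le> B * (R div B) + int a'" using B LR(4) by (simp add: pos_imp_zdiv_nonneg_iff)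
  ultimately show ?thesis using LR q' dom_q
    by (auto simp: write_stmts_def simulates_def B_def int_bin_def domIff)
qed

lemma exec_move_stmts:
  assumes M: "valid_tm M" and sim: "simulates M (q, tp, h) \<Sigma>" and d: "d \<in> {-1, 0, 1}"
  shows "\<exists>\<Sigma>'. exec_seq_fun \<Sigma> (move_stmts (nsyms M) d) = Some \<Sigma>' \<and> simulates M (q, tp, h + d) \<Sigma>'"
proof -
  define B where "B = int (nsyms M)"
  obtain L R where LR: "\<Sigma> ''L'' = Some (VInt L)" "\<Sigma> ''R'' = Some (VInt R)" "0 \<le> L" "0 \<le> R"
    and tape: "tape_repr B tp h L R" and q: "q < nstates M" "\<Sigma> ''q'' = Some (VInt (int q))"
    using sim unfolding simulates_def B_def by auto
  have B: "0 < B" "0 < nsyms M" using valid_tm_nsyms[OF M] by (simp_all add: B_def)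
  consider "d = 1" | "d = -1" | "d = 0" using d by auto
  then show ?thesis
  proof cases
    case 1
    then show ?thesis using tape_repr_move_right[OF tape B(1)] LR q B
      by (auto simp: move_stmts_def simulates_def B_def eval_fun_times_const int_bin_def
          cdiv_nonneg cmod_nonneg pos_imp_zdiv_nonneg_iff domIff algebra_simps)
  next
    case 2
    then show ?thesis using tape_repr_move_left[OF tape B(1)] LR q B
      by (auto simp: move_stmts_def simulates_def B_def eval_fun_times_const int_bin_def
          cdiv_nonneg cmod_nonneg pos_imp_zdiv_nonneg_iff domIff algebra_simps)
  qed (use sim in \<open>simp add: move_stmts_def\<close>)
qed

lemma exec_action_stmt:
  assumes M: "valid_tm M" and sim: "simulates M (q, tp, h) \<Sigma>" and "q \<noteq> 1"
  shows "\<exists>\<Sigma>'. exec_fun \<Sigma> (action_stmt M q (tp h)) = Some \<Sigma>' \<and>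
    simulates M (tm_step M (q, tp, h)) \<Sigma>'"
proof -
  obtain q' a' d where \<delta>: "delta M q (tp h) = (q', a', d)" by (cases "delta M q (tp h)")
  have "q < nstates M" using sim unfolding simulates_def by simp
  then have valid: "q' < nstates M" "a' < nsyms M" "d \<in> {-1, 0, 1}"
    using valid_tm_delta[OF M _ simulates_head[OF M sim] \<delta>] by auto
  obtain \<Sigma>1 where \<Sigma>1: "exec_seq_fun \<Sigma> (write_stmts (tp h) a' q') = Some \<Sigma>1"
    "simulates M (q', tp(h := a'), h) \<Sigma>1"
    using exec_write_stmts[OF M sim valid(1,2)] by blast
  obtain \<Sigma>2 where "exec_seq_fun \<Sigma>1 (move_stmts (nsyms M) d) = Some \<Sigma>2"
    "simulates M (q', tp(h := a'), h + d) \<Sigma>2"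
    using exec_move_stmts[OF M \<Sigma>1(2) valid(3)] by blast
  with \<Sigma>1 \<delta> \<open>q \<noteq> 1\<close> show ?thesis by (auto simp: action_stmt_def exec_seq_fun_append)
qed

lemma exec_dispatch:
  assumes "(q, a) \<in> set ps" "\<Sigma> ''q'' = Some (VInt (int q))" "\<Sigma> ''R'' = Some (VInt R)" "0 \<le> R"
    "R mod int (nsyms M) = int a" "0 < nsyms M"
  shows "exec_fun \<Sigma> (dispatch M ps) = exec_fun \<Sigma> (action_stmt M q a)"
  using assms(1)
proof (induction ps)
  case (Cons p ps)
  obtain q0 a0 where p: "p = (q0, a0)" by fastforce
  have "eval_fun \<Sigma> (eAnd (eEq (Var ''q'') (NumLit q0))
      (eEq (eMod (Var ''R'') (NumLit (nsyms M))) (NumLit a0))) = Some (VBool (q = q0 \<and> a = a0))"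
    using assms(2-6) by (simp add: int_bin_def bool_bin_def cmod_nonneg)
  then show ?case using Cons p by auto
qed simp

lemma exec_step_stmt:
  assumes M: "valid_tm M" and sim: "simulates M c \<Sigma>"
  shows "\<exists>\<Sigma>'. exec_fun \<Sigma> (step_stmt M) = Some \<Sigma>' \<and> simulates M (tm_step M c) \<Sigma>'"
proof -
  obtain q tp h where c: "c = (q, tp, h)" by (cases c)
  obtain L R where q: "q < nstates M" "\<Sigma> ''q'' = Some (VInt (int q))"
    and R: "\<Sigma> ''R'' = Some (VInt R)" "0 \<le> R" and tape: "tape_repr (int (nsyms M)) tp h L R"
    using sim unfolding simulates_def c by auto
  show ?thesis
  proof (cases "q = 1")
    case True
    then show ?thesis using sim q c by (simp add: step_stmt_def int_bin_def)
  next
    case False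
    have "(q, tp h) \<in> set (List.product [0..<nstates M] [0..<nsyms M])"
      using q(1) simulates_head[OF M sim[unfolded c]] by simp
    then have "exec_fun \<Sigma> (step_stmt M) = exec_fun \<Sigma> (action_stmt M q (tp h))"
      using False q R tape_repr_head[OF tape] valid_tm_nsyms[OF M]
      by (simp add: step_stmt_def int_bin_def exec_dispatch)
    then show ?thesis using exec_action_stmt[OF M sim[unfolded c] False] c by simp
  qed
qed

lemma assigned_vars_step_stmt: "assigned_vars (step_stmt M) \<subseteq> {''R'', ''L'', ''q''}"
proof -
  have "assigned_vars (dispatch M ps) \<subseteq> {''R'', ''L'', ''q''}" for ps
    by (induction ps rule: dispatch.induct)
      (auto simp: action_stmt_def write_stmts_def move_stmts_def split: prod.splits)
  then show ?thesis by (auto simp: step_stmt_def)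
qed

lemma tm_run_Suc: "tm_run M (Suc k) c = tm_step M (tm_run M k c)"
  unfolding tm_run_def by simp

lemma tm_run_halted:
  assumes "fst (tm_run M t c) = 1" "t \<le> t'"
  shows "tm_run M t' c = tm_run M t c"
  using assms(2)
proof (induction t' rule: dec_induct)
  case (step t')
  then show ?case using assms(1) by (cases "tm_run M t c") (simp add: tm_run_Suc)
qed simp

lemma hoare_simulation_loop:
  assumes M: "valid_tm M"
  shows "hoare (\<lambda>\<Sigma>. simulates M c \<Sigma> \<and> \<Sigma> ''z'' = Some (VInt n)) (For ''i'' (Var ''z'') (step_stmt M))
    (simulates M (tm_run M (floorlog 2 (nat \<bar>n\<bar>)) c))"
proof (rule hoare_For)
  fix k \<Sigma> j assume "simulates M (tm_run M k c) \<Sigma>"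
  then have "simulates M (tm_run M k c) (\<Sigma>(''i'' \<mapsto> VInt j))" by (simp add: simulates_upd)
  then show "\<exists>\<Sigma>'. exec (\<Sigma>(''i'' \<mapsto> VInt j)) (step_stmt M) \<Sigma>' \<and> simulates M (tm_run M (Suc k) c) \<Sigma>'"
    using exec_step_stmt[OF M] exec_if_exec_fun(1) by (metis tm_run_Suc)
qed (simp add: tm_run_def)


definition param_name :: "nat \<Rightarrow> string" where
  "param_name j = replicate (Suc j) CHR ''x''"

definition work_vars :: "string set" where
  "work_vars = {''R'', ''L'', ''q'', ''N'', ''W'', ''A'', ''g'', ''y'', ''z''}"

lemma param_name_inj: "inj param_name"
  by (rule injI) (simp add: param_name_def)

lemma not_param_name [simp]:
  "x \<in> {''R'', ''L'', ''q'', ''N'', ''W'', ''A'', ''g'', ''y'', ''z'', ''i'', ''k''} \<Longrightarrow>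
   x \<notin> range param_name"
  by (auto simp: param_name_def)

lemma param_name_neq [simp]:
  "x \<in> {''R'', ''L'', ''q'', ''N'', ''W'', ''A'', ''g'', ''y'', ''z'', ''i'', ''k''} \<Longrightarrow>
   param_name j \<noteq> x"
  using not_param_name by blast

lemma disjoint_param_names:
  "X \<subseteq> {''R'', ''L'', ''q'', ''N'', ''W'', ''A'', ''g'', ''y'', ''z'', ''i'', ''k''} \<Longrightarrow>
   X \<inter> range param_name = {}"
  using not_param_name by blast

definition base_store :: "int list \<Rightarrow> store \<Rightarrow> bool" where
  "base_store vs \<Sigma> \<longleftrightarrow> (\<forall>j < length vs. \<Sigma> (param_name j) = Some (VInt (vs ! j))) \<and> work_vars \<subseteq> dom \<Sigma>"

lemma base_store_upd: "base_store vs \<Sigma> \<Longrightarrow> x \<notin> range param_name \<Longrightarrow> base_store vs (\<Sigma>(x \<mapsto> v))"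
  unfolding base_store_def by auto

lemma base_store_dom: "base_store vs \<Sigma> \<Longrightarrow> x \<in> work_vars \<Longrightarrow> x \<in> dom \<Sigma>"
  unfolding base_store_def by auto

lemma base_store_param: "base_store vs \<Sigma> \<Longrightarrow> j < length vs \<Longrightarrow> \<Sigma> (param_name j) = Some (VInt (vs ! j))"
  unfolding base_store_def by auto

lemma preserved_outside_base_store:
  assumes "X \<inter> range param_name = {}"
  shows "preserved_outside X (base_store vs)"
proof (unfold preserved_outside_def, intro allI impI)
  fix \<Sigma> \<Sigma>' assume b: "base_store vs \<Sigma>" and same: "\<forall>x. x \<notin> X \<longrightarrow> \<Sigma>' x = \<Sigma> x"
    and dom: "dom \<Sigma> \<subseteq> dom \<Sigma>'"
  have "\<Sigma>' (param_name j) = \<Sigma> (param_name j)" for j using same assms by blast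
  with b show "base_store vs \<Sigma>'"
    unfolding base_store_def using order_trans[of work_vars "dom \<Sigma>" "dom \<Sigma>'"] dom by simp
qed

lemma base_store_declared:
  "base_store vs \<Sigma> \<Longrightarrow> x \<in> {''R'', ''L'', ''q'', ''N'', ''W'', ''A'', ''g'', ''y'', ''z''} \<Longrightarrow>
   \<exists>v. \<Sigma> x = Some v"
  unfolding base_store_def work_vars_def by blast

lemmas base_store_simps =
  base_store_upd base_store_dom[unfolded work_vars_def] base_store_declared base_store_param


section \<open>Writing the input onto the simulated tape\<close>

definition from_digits :: "int \<Rightarrow> nat list \<Rightarrow> int" where
  "from_digits B xs = foldr (\<lambda>a r. int a + B * r) xs 0"

lemma from_digits_Nil [simp]: "from_digits B [] = 0"
  and from_digits_Cons [simp]: "from_digits B (a # xs) = int a + B * from_digits B xs"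
  by (simp_all add: from_digits_def)

lemma from_digits_nonneg: "0 \<le> B \<Longrightarrow> 0 \<le> from_digits B xs"
  by (induction xs) auto

lemma digit_from_digits:
  "(\<forall>a \<in> set xs. int a < B) \<Longrightarrow>
   digit B (from_digits B xs) k = (if k < length xs then int (xs ! k) else 0)"
proof (induction xs arbitrary: k)
  case Nil
  then show ?case by (simp add: digit_def)
next
  case (Cons a xs)
  then show ?case
    using digit_push[of "int a" B "from_digits B xs" k] by (cases k) (simp_all add: algebra_simps)
qed

definition sum_bitlen :: "int list \<Rightarrow> nat \<Rightarrow> nat" where
  "sum_bitlen vs n = (\<Sum>j<n. floorlog 2 (nat \<bar>vs ! j\<bar>))"

lemma length_enc_int: "length (enc_int v) \<le> floorlog 2 (nat \<bar>v\<bar>) + 2"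
  using length_bits[of "nat \<bar>v\<bar>"] by (cases "v < 0") (simp_all add: enc_int_def)

lemma length_enc_input: "length (enc_input vs) \<le> sum_bitlen vs (length vs) + 3 * length vs"
proof -
  have "length (enc_input vs) = (\<Sum>j<length vs. length (enc_int (vs ! j)) + 1)"
    by (simp add: enc_input_def length_concat comp_def sum_list_sum_nth lessThan_atLeast0)
  also have "\<dots> \<le> (\<Sum>j<length vs. floorlog 2 (nat \<bar>vs ! j\<bar>) + 3)"
    using length_enc_int by (intro sum_mono) (simp add: add.commute add_mono)
  also have "\<dots> = sum_bitlen vs (length vs) + 3 * length vs"
    by (simp add: sum_bitlen_def sum.distrib)
  finally show ?thesis .
qed

lemma enc_input_symbols: "a \<in> set (enc_input vs) \<Longrightarrow> a < 5"
  using bits_digits by (fastforce simp: enc_input_def enc_int_def split: if_splits)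

lemma simulates_init_config:
  assumes M: "valid_tm M" and symbols: "\<forall>a \<in> set w. a < nsyms M"
    and \<Sigma>: "\<Sigma> ''q'' = Some (VInt 0)" "\<Sigma> ''L'' = Some (VInt 0)"
      "\<Sigma> ''R'' = Some (VInt (from_digits (int (nsyms M)) w))"
  shows "simulates M (init_config w) \<Sigma>"
proof -
  have "tape_repr (int (nsyms M)) (\<lambda>i. if 0 \<le> i \<and> i < int (length w) then w ! nat i else 0) 0 0
      (from_digits (int (nsyms M)) w)"
    using digit_from_digits[of w "int (nsyms M)"] symbols by (auto simp: tape_repr_def digit_def)
  moreover have "2 \<le> nstates M" "0 < nsyms M" using M by (auto simp: valid_tm_def)
  ultimately show ?thesis
    using \<Sigma> from_digits_nonneg[of "int (nsyms M)" w] by (simp add: simulates_def init_config_def)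
qed

definition bit_push :: "nat \<times> nat list \<Rightarrow> nat \<times> nat list" where
  "bit_push p = (fst p div 2, (fst p mod 2 + 1) # snd p)"

lemma funpow_bit_push: "0 < n \<Longrightarrow> (bit_push ^^ floorlog 2 n) (n, ys) = (0, bits n @ ys)"
proof (induction n arbitrary: ys rule: less_induct)
  case (less n)
  have "floorlog 2 n = Suc (floorlog 2 (n div 2))"
    using less.prems by (subst compute_floorlog) simp
  then have step: "(bit_push ^^ floorlog 2 n) (n, ys) =
      (bit_push ^^ floorlog 2 (n div 2)) (n div 2, (n mod 2 + 1) # ys)"
    by (simp only: funpow_Suc_right) (simp add: bit_push_def)
  show ?case
  proof (cases "n < 2")
    case True
    then show ?thesis using step less.prems by (simp add: bits_less_2 floorlog_def)
  next
    case False
    then have "(bit_push ^^ floorlog 2 (n div 2)) (n div 2, (n mod 2 + 1) # ys) =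
        (0, bits (n div 2) @ (n mod 2 + 1) # ys)"
      using less.IH[of "n div 2"] by simp
    then show ?thesis using step bits_ge_2[of n] False by simp
  qed
qed

definition push_stmt :: "nat \<Rightarrow> nat \<Rightarrow> stmt" where
  "push_stmt B a = Assign ''R'' (eAdd (NumLit a) (times_const B (Var ''R'')))"

definition push_bit_stmt :: "nat \<Rightarrow> stmt" where
  "push_bit_stmt B = Block
     [Assign ''R'' (eAdd (eAdd (eMod (Var ''N'') (NumLit 2)) (NumLit 1)) (times_const B (Var ''R''))),
      Assign ''N'' (eDiv (Var ''N'') (NumLit 2))]"

lemma exec_push_bit:
  assumes "0 < B" "\<Sigma> ''N'' = Some (VInt (int a))" "\<Sigma> ''R'' = Some (VInt (from_digits (int B) ds))"
  shows "exec_fun \<Sigma> (push_bit_stmt B) = Some (\<Sigma>(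
    ''R'' \<mapsto> VInt (from_digits (int B) (snd (bit_push (a, ds)))),
    ''N'' \<mapsto> VInt (int (fst (bit_push (a, ds))))))"
  using assms by (simp add: push_bit_stmt_def bit_push_def eval_fun_times_const int_bin_def
      cmod_nonneg cdiv_nonneg of_nat_mod of_nat_div domIff add.commute)

definition push_bits_stmt :: "nat \<Rightarrow> stmt" where
  "push_bits_stmt B = For ''i'' (Var ''y'') (push_bit_stmt B)"

lemma hoare_push_bits:
  assumes "0 < B"
  shows "hoare (\<lambda>\<Sigma>. base_store vs \<Sigma> \<and> \<Sigma> ''N'' = Some (VInt (int n)) \<and> \<Sigma> ''y'' = Some (VInt (int n)) \<and>
      \<Sigma> ''R'' = Some (VInt (from_digits (int B) ys)))
    (push_bits_stmt B)
    (\<lambda>\<Sigma>. base_store vs \<Sigma> \<and>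
      \<Sigma> ''R'' = Some (VInt (from_digits (int B) (if n = 0 then ys else bits n @ ys))))"
proof -
  define I where "I k \<Sigma> \<longleftrightarrow> base_store vs \<Sigma> \<and>
    \<Sigma> ''N'' = Some (VInt (int (fst ((bit_push ^^ k) (n, ys))))) \<and>
    \<Sigma> ''R'' = Some (VInt (from_digits (int B) (snd ((bit_push ^^ k) (n, ys)))))" for k \<Sigma>
  have "hoare (\<lambda>\<Sigma>. base_store vs \<Sigma> \<and> \<Sigma> ''N'' = Some (VInt (int n)) \<and> \<Sigma> ''y'' = Some (VInt (int n)) \<and>
      \<Sigma> ''R'' = Some (VInt (from_digits (int B) ys)))
    (push_bits_stmt B) (I (floorlog 2 (nat \<bar>int n\<bar>)))"
    unfolding push_bits_stmt_def
  proof (rule hoare_For)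
    fix k \<Sigma> j assume "I k \<Sigma>"
    then have "exec_fun (\<Sigma>(''i'' \<mapsto> VInt j)) (push_bit_stmt B) = Some (\<Sigma>(''i'' \<mapsto> VInt j,
        ''R'' \<mapsto> VInt (from_digits (int B) (snd ((bit_push ^^ Suc k) (n, ys)))),
        ''N'' \<mapsto> VInt (int (fst ((bit_push ^^ Suc k) (n, ys))))))"
      and "I (Suc k) (\<Sigma>(''i'' \<mapsto> VInt j,
        ''R'' \<mapsto> VInt (from_digits (int B) (snd ((bit_push ^^ Suc k) (n, ys)))),
        ''N'' \<mapsto> VInt (int (fst ((bit_push ^^ Suc k) (n, ys))))))"
      using assms by (simp_all add: I_def exec_push_bit base_store_simps)
    then show "\<exists>\<Sigma>'. exec (\<Sigma>(''i'' \<mapsto> VInt j)) (push_bit_stmt B) \<Sigma>' \<and> I (Suc k) \<Sigma>'"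
      by (blast intro: exec_if_exec_fun(1))
  qed (auto simp: I_def)
  then show ?thesis
  proof (rule hoare_conseq)
    fix \<Sigma> assume "I (floorlog 2 (nat \<bar>int n\<bar>)) \<Sigma>"
    then show "base_store vs \<Sigma> \<and>
      \<Sigma> ''R'' = Some (VInt (from_digits (int B) (if n = 0 then ys else bits n @ ys)))"
      by (cases "n = 0") (simp add: I_def floorlog_def, simp add: I_def funpow_bit_push)
  qed
qed

definition start_arg_stmts :: "nat \<Rightarrow> nat \<Rightarrow> stmt list" where
  "start_arg_stmts B j =
     [push_stmt B 4,
      Assign ''N'' (Var (param_name j)),
      If (eLt (Var ''N'') (NumLit 0)) (Assign ''N'' (eSub (NumLit 0) (Var ''N''))) (Block []),
      Assign ''y'' (Var ''N'')]"

definition finish_arg_stmts :: "nat \<Rightarrow> nat \<Rightarrow> stmt list" where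
  "finish_arg_stmts B j =
     [If (eEq (Var (param_name j)) (NumLit 0)) (push_stmt B 1) (Block []),
      If (eLt (Var (param_name j)) (NumLit 0)) (push_stmt B 3) (Block [])]"

definition encode_arg_stmts :: "nat \<Rightarrow> nat \<Rightarrow> stmt list" where
  "encode_arg_stmts B j = start_arg_stmts B j @ push_bits_stmt B # finish_arg_stmts B j"

lemma hoare_start_arg:
  assumes "0 < B" "j < length vs"
  shows "hoare_seq (\<lambda>\<Sigma>. base_store vs \<Sigma> \<and> \<Sigma> ''R'' = Some (VInt (from_digits (int B) rest)))
    (start_arg_stmts B j)
    (\<lambda>\<Sigma>. base_store vs \<Sigma> \<and> \<Sigma> ''N'' = Some (VInt \<bar>vs ! j\<bar>) \<and> \<Sigma> ''y'' = Some (VInt \<bar>vs ! j\<bar>) \<and>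
      \<Sigma> ''R'' = Some (VInt (from_digits (int B) (4 # rest))))"
proof (rule hoare_seq_by_exec_seq_fun)
  fix \<Sigma> assume \<Sigma>: "base_store vs \<Sigma> \<and> \<Sigma> ''R'' = Some (VInt (from_digits (int B) rest))"
  then have base: "base_store vs \<Sigma>" and arg: "\<Sigma> (param_name j) = Some (VInt (vs ! j))"
    using assms(2) by (simp_all add: base_store_simps)
  show "\<exists>\<Sigma>'. exec_seq_fun \<Sigma> (start_arg_stmts B j) = Some \<Sigma>' \<and>
    base_store vs \<Sigma>' \<and> \<Sigma>' ''N'' = Some (VInt \<bar>vs ! j\<bar>) \<and> \<Sigma>' ''y'' = Some (VInt \<bar>vs ! j\<bar>) \<and>
    \<Sigma>' ''R'' = Some (VInt (from_digits (int B) (4 # rest)))"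
    by (cases "vs ! j < 0") (use \<Sigma> base arg assms(1) in \<open>simp_all add: start_arg_stmts_def
      push_stmt_def eval_fun_times_const int_bin_def base_store_simps\<close>)
qed

lemma hoare_finish_arg:
  assumes "0 < B" "j < length vs"
  shows "hoare_seq (\<lambda>\<Sigma>. base_store vs \<Sigma> \<and> \<Sigma> ''R'' = Some (VInt (from_digits (int B)
      (if vs ! j = 0 then ys else bits (nat \<bar>vs ! j\<bar>) @ ys))))
    (finish_arg_stmts B j)
    (\<lambda>\<Sigma>. base_store vs \<Sigma> \<and> \<Sigma> ''R'' = Some (VInt (from_digits (int B) (enc_int (vs ! j) @ ys))))"
proof (rule hoare_seq_by_exec_seq_fun)
  fix \<Sigma> assume \<Sigma>: "base_store vs \<Sigma> \<and> \<Sigma> ''R'' = Some (VInt (from_digits (int B)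
      (if vs ! j = 0 then ys else bits (nat \<bar>vs ! j\<bar>) @ ys)))"
  then have base: "base_store vs \<Sigma>" and arg: "\<Sigma> (param_name j) = Some (VInt (vs ! j))"
    using assms(2) by (simp_all add: base_store_simps)
  consider "vs ! j = 0" | "vs ! j < 0" | "vs ! j > 0" by linarith
  then show "\<exists>\<Sigma>'. exec_seq_fun \<Sigma> (finish_arg_stmts B j) = Some \<Sigma>' \<and>
    base_store vs \<Sigma>' \<and> \<Sigma>' ''R'' = Some (VInt (from_digits (int B) (enc_int (vs ! j) @ ys)))"
    by cases (use \<Sigma> base arg assms(1) in \<open>simp_all add: finish_arg_stmts_def push_stmt_def
      eval_fun_times_const int_bin_def base_store_simps enc_int_def bits_less_2\<close>)
qed

lemma enc_input_drop:
  "j < length vs \<Longrightarrow> enc_input (drop j vs) = enc_int (vs ! j) @ 4 # enc_input (drop (Suc j) vs)"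
  by (simp add: enc_input_def Cons_nth_drop_Suc[symmetric])

lemma hoare_encode_arg:
  assumes "0 < B" "j < length vs"
  shows "hoare_seq
    (\<lambda>\<Sigma>. base_store vs \<Sigma> \<and> \<Sigma> ''R'' = Some (VInt (from_digits (int B) (enc_input (drop (Suc j) vs)))))
    (encode_arg_stmts B j)
    (\<lambda>\<Sigma>. base_store vs \<Sigma> \<and> \<Sigma> ''R'' = Some (VInt (from_digits (int B) (enc_input (drop j vs)))))"
proof -
  have n: "int (nat \<bar>vs ! j\<bar>) = \<bar>vs ! j\<bar>" "(nat \<bar>vs ! j\<bar> = 0) = (vs ! j = 0)" by auto
  have "hoare (\<lambda>\<Sigma>. base_store vs \<Sigma> \<and> \<Sigma> ''N'' = Some (VInt \<bar>vs ! j\<bar>) \<and>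
      \<Sigma> ''y'' = Some (VInt \<bar>vs ! j\<bar>) \<and>
      \<Sigma> ''R'' = Some (VInt (from_digits (int B) (4 # enc_input (drop (Suc j) vs)))))
    (push_bits_stmt B)
    (\<lambda>\<Sigma>. base_store vs \<Sigma> \<and> \<Sigma> ''R'' = Some (VInt (from_digits (int B)
      (if vs ! j = 0 then 4 # enc_input (drop (Suc j) vs)
       else bits (nat \<bar>vs ! j\<bar>) @ 4 # enc_input (drop (Suc j) vs)))))"
    using hoare_push_bits[OF assms(1), of vs "nat \<bar>vs ! j\<bar>" "4 # enc_input (drop (Suc j) vs)"]
    by (simp only: n)
  then show ?thesis
    unfolding encode_arg_stmts_def enc_input_drop[OF assms(2)]
    by (rule hoare_seq_append[OF hoare_start_arg[OF assms]
          hoare_seq_Cons[OF _ hoare_finish_arg[OF assms]]])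
qed

definition encode_input_stmts :: "nat \<Rightarrow> nat \<Rightarrow> stmt list" where
  "encode_input_stmts B m = concat (map (encode_arg_stmts B) (rev [0..<m]))"

lemma hoare_encode_input:
  assumes "0 < B"
  shows "n \<le> length vs \<Longrightarrow> hoare_seq
    (\<lambda>\<Sigma>. base_store vs \<Sigma> \<and> \<Sigma> ''R'' = Some (VInt (from_digits (int B) (enc_input (drop n vs)))))
    (encode_input_stmts B n)
    (\<lambda>\<Sigma>. base_store vs \<Sigma> \<and> \<Sigma> ''R'' = Some (VInt (from_digits (int B) (enc_input vs))))"
proof (induction n)
  case 0
  then show ?case by (auto intro: hoare_seq_Nil simp: encode_input_stmts_def)
next
  case (Suc n)
  then show ?case
    using hoare_seq_append[OF hoare_encode_arg[OF assms, of n vs] Suc.IH]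
    by (simp add: encode_input_stmts_def)
qed

lemma assigned_vars_encode_input:
  "assigned_vars_seq (encode_input_stmts B m) \<subseteq> {''R'', ''N'', ''y'', ''i''}"
  by (auto simp: encode_input_stmts_def encode_arg_stmts_def start_arg_stmts_def
      finish_arg_stmts_def push_stmt_def push_bits_stmt_def push_bit_stmt_def)


section \<open>A clock exceeding the running time\<close>

definition double_stmt :: stmt where
  "double_stmt = Assign ''W'' (eAdd (Var ''W'') (Var ''W''))"

lemma hoare_double_loop:
  assumes "x \<noteq> ''W''"
  shows "hoare (\<lambda>\<Sigma>. \<Sigma> ''W'' = Some (VInt w) \<and> \<Sigma> z = Some (VInt n)) (For x (Var z) double_stmt)
    (\<lambda>\<Sigma>. \<Sigma> ''W'' = Some (VInt (w * 2 ^ floorlog 2 (nat \<bar>n\<bar>))))"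
proof (rule hoare_For[where I = "\<lambda>k \<Sigma>. \<Sigma> ''W'' = Some (VInt (w * 2 ^ k))"])
  fix k \<Sigma> j assume "\<Sigma> ''W'' = Some (VInt (w * 2 ^ k))"
  then have "exec_fun (\<Sigma>(x \<mapsto> VInt j)) double_stmt =
      Some (\<Sigma>(x \<mapsto> VInt j, ''W'' \<mapsto> VInt (w * 2 ^ Suc k)))"
    using assms by (simp add: double_stmt_def int_bin_def domIff ac_simps)
  then show "\<exists>\<Sigma>'. exec (\<Sigma>(x \<mapsto> VInt j)) double_stmt \<Sigma>' \<and> \<Sigma>' ''W'' = Some (VInt (w * 2 ^ Suc k))"
    by (auto dest: exec_if_exec_fun(1))
qed auto

lemma assigned_vars_double_stmt [simp]: "assigned_vars double_stmt = {''W''}"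
  by (simp add: double_stmt_def)

definition clock_arg_stmts :: "nat \<Rightarrow> stmt list" where
  "clock_arg_stmts j = [Assign ''y'' (Var (param_name j)), For ''i'' (Var ''y'') double_stmt]"

lemma hoare_clock_arg:
  assumes "j < length vs"
  shows "hoare_seq (\<lambda>\<Sigma>. base_store vs \<Sigma> \<and> \<Sigma> ''W'' = Some (VInt w)) (clock_arg_stmts j)
    (\<lambda>\<Sigma>. base_store vs \<Sigma> \<and> \<Sigma> ''W'' = Some (VInt (w * 2 ^ floorlog 2 (nat \<bar>vs ! j\<bar>))))"
proof -
  have "hoare (\<lambda>\<Sigma>. base_store vs \<Sigma> \<and> \<Sigma> ''W'' = Some (VInt w)) (Assign ''y'' (Var (param_name j)))
    (\<lambda>\<Sigma>. (\<Sigma> ''W'' = Some (VInt w) \<and> \<Sigma> ''y'' = Some (VInt (vs ! j))) \<and> base_store vs \<Sigma>)"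
    by (rule hoare_by_exec_fun) (use assms in \<open>auto simp: base_store_simps\<close>)
  moreover have "hoare
    (\<lambda>\<Sigma>. (\<Sigma> ''W'' = Some (VInt w) \<and> \<Sigma> ''y'' = Some (VInt (vs ! j))) \<and> base_store vs \<Sigma>)
    (For ''i'' (Var ''y'') double_stmt)
    (\<lambda>\<Sigma>. \<Sigma> ''W'' = Some (VInt (w * 2 ^ floorlog 2 (nat \<bar>vs ! j\<bar>))) \<and> base_store vs \<Sigma>)"
    by (rule hoare_frame[OF hoare_double_loop preserved_outside_base_store]) auto
  ultimately have "hoare_seq (\<lambda>\<Sigma>. base_store vs \<Sigma> \<and> \<Sigma> ''W'' = Some (VInt w)) (clock_arg_stmts j)
    (\<lambda>\<Sigma>. \<Sigma> ''W'' = Some (VInt (w * 2 ^ floorlog 2 (nat \<bar>vs ! j\<bar>))) \<and> base_store vs \<Sigma>)"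
    unfolding clock_arg_stmts_def by (rule hoare_seq_Cons[OF _ hoare_seq_single])
  then show ?thesis by (rule hoare_seq_conseq) auto
qed

lemma hoare_clock_args:
  "n \<le> length vs \<Longrightarrow>
   hoare_seq (\<lambda>\<Sigma>. base_store vs \<Sigma> \<and> \<Sigma> ''W'' = Some (VInt w)) (concat (map clock_arg_stmts [0..<n]))
     (\<lambda>\<Sigma>. base_store vs \<Sigma> \<and> \<Sigma> ''W'' = Some (VInt (w * 2 ^ sum_bitlen vs n)))"
proof (induction n)
  case 0
  then show ?case by (auto intro: hoare_seq_Nil simp: sum_bitlen_def)
next
  case (Suc n)
  then show ?case
    using hoare_seq_append[OF Suc.IH hoare_clock_arg[of n vs]]
    by (simp add: sum_bitlen_def power_add mult.assoc)
qed

text \<open>A squaring round replaces \<open>z = 2 ^ E\<close> by \<open>2 ^ (E + 1)\<^sup>2\<close>: the loops over \<open>size(z)\<close>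
  run \<open>E + 1\<close> times each.\<close>

definition square_stmts :: "stmt list" where
  "square_stmts =
     [Assign ''W'' (NumLit 1),
      For ''i'' (Var ''z'') (For ''k'' (Var ''z'') double_stmt),
      Assign ''z'' (Var ''W'')]"

lemma hoare_square:
  "hoare_seq (\<lambda>\<Sigma>. base_store vs \<Sigma> \<and> \<Sigma> ''z'' = Some (VInt (2 ^ E))) square_stmts
     (\<lambda>\<Sigma>. base_store vs \<Sigma> \<and> \<Sigma> ''z'' = Some (VInt (2 ^ (E + 1)\<^sup>2)))"
proof -
  define G where "G \<Sigma> \<longleftrightarrow> base_store vs \<Sigma> \<and> \<Sigma> ''z'' = Some (VInt (2 ^ E))" for \<Sigma>
  define I where "I k \<Sigma> \<longleftrightarrow> \<Sigma> ''W'' = Some (VInt (2 ^ (k * (E + 1)))) \<and> G \<Sigma>" for k \<Sigma>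
  have G: "preserved_outside {''k'', ''W''} G"
    unfolding G_def by (auto intro!: preserved_outside_conj preserved_outside_base_store
        preserved_outside_var_eq)
  have inner: "hoare
    (\<lambda>\<Sigma>. \<Sigma> ''W'' = Some (VInt (2 ^ (k * (E + 1)))) \<and> \<Sigma> ''z'' = Some (VInt (2 ^ E)) \<and> G \<Sigma>)
    (For ''k'' (Var ''z'') double_stmt) (I (Suc k))" for k
  proof -
    have "preserved_outside (assigned_vars (For ''k'' (Var ''z'') double_stmt)) G"
      using G by (simp add: insert_commute)
    from hoare_frame[OF hoare_double_loop[of "''k''" "2 ^ (k * (E + 1))" "''z''" "2 ^ E"] this]
    show ?thesis
      by (rule hoare_conseq) (auto simp: I_def floorlog_2_power nat_power_eq power_add[symmetric])
  qed
  have outer: "hoare (I 0) (For ''i'' (Var ''z'') (For ''k'' (Var ''z'') double_stmt))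
    (I (floorlog 2 (nat \<bar>2 ^ E\<bar>)))"
  proof (rule hoare_For)
    fix k \<Sigma> j assume "I k \<Sigma>"
    then have "I k (\<Sigma>(''i'' \<mapsto> VInt j))"
      by (simp add: I_def G_def base_store_simps)
    then show "\<exists>\<Sigma>'. exec (\<Sigma>(''i'' \<mapsto> VInt j)) (For ''k'' (Var ''z'') double_stmt) \<Sigma>' \<and> I (Suc k) \<Sigma>'"
      using inner[of k] unfolding hoare_def I_def G_def by blast
  qed (auto simp: I_def G_def)
  have iterations: "floorlog 2 (nat \<bar>(2::int) ^ E\<bar>) = E + 1"
    by (simp add: nat_power_eq floorlog_2_power)
  show ?thesis
    unfolding square_stmts_def
  proof (intro hoare_seq_Cons hoare_seq_Nil)
    show "hoare (\<lambda>\<Sigma>. base_store vs \<Sigma> \<and> \<Sigma> ''z'' = Some (VInt (2 ^ E)))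
      (Assign ''W'' (NumLit 1)) (I 0)"
      by (rule hoare_by_exec_fun) (auto simp: I_def G_def base_store_simps)
    show "hoare (I (E + 1)) (Assign ''z'' (Var ''W''))
      (\<lambda>\<Sigma>. base_store vs \<Sigma> \<and> \<Sigma> ''z'' = Some (VInt (2 ^ (E + 1)\<^sup>2)))"
      by (rule hoare_by_exec_fun) (auto simp: I_def G_def base_store_simps power2_eq_square)
  qed (use outer iterations in simp)
qed

lemma hoare_squares:
  "hoare_seq (\<lambda>\<Sigma>. base_store vs \<Sigma> \<and> \<Sigma> ''z'' = Some (VInt (2 ^ E)))
     (concat (replicate d square_stmts))
     (\<lambda>\<Sigma>. base_store vs \<Sigma> \<and> \<Sigma> ''z'' = Some (VInt (2 ^ ((\<lambda>E. (E + 1)\<^sup>2) ^^ d) E)))"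
proof (induction d)
  case 0
  then show ?case by (auto intro: hoare_seq_Nil)
next
  case (Suc d)
  have "concat (replicate (Suc d) square_stmts) = concat (replicate d square_stmts) @ square_stmts"
    by (simp add: replicate_append_same[symmetric])
  then show ?case using hoare_seq_append[OF Suc.IH hoare_square] by simp
qed

definition clock_stmts :: "nat \<Rightarrow> nat \<Rightarrow> nat \<Rightarrow> stmt list" where
  "clock_stmts r n d = [Assign ''W'' (NumLit (2 ^ r))] @ concat (map clock_arg_stmts [0..<n]) @
     [Assign ''z'' (Var ''W'')] @ concat (replicate d square_stmts)"

lemma hoare_clock:
  assumes "n \<le> length vs"
  shows "hoare_seq (base_store vs) (clock_stmts r n d)
    (\<lambda>\<Sigma>. base_store vs \<Sigma> \<and> \<Sigma> ''z'' = Some (VInt (2 ^ ((\<lambda>E. (E + 1)\<^sup>2) ^^ d) (r + sum_bitlen vs n))))"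
proof -
  have start: "hoare_seq (base_store vs) [Assign ''W'' (NumLit (2 ^ r))]
    (\<lambda>\<Sigma>. base_store vs \<Sigma> \<and> \<Sigma> ''W'' = Some (VInt (2 ^ r)))"
    by (rule hoare_seq_by_exec_seq_fun) (auto simp: base_store_simps)
  have copy: "hoare_seq (\<lambda>\<Sigma>. base_store vs \<Sigma> \<and> \<Sigma> ''W'' = Some (VInt (2 ^ (r + sum_bitlen vs n))))
    [Assign ''z'' (Var ''W'')]
    (\<lambda>\<Sigma>. base_store vs \<Sigma> \<and> \<Sigma> ''z'' = Some (VInt (2 ^ (r + sum_bitlen vs n))))"
    by (rule hoare_seq_by_exec_seq_fun) (auto simp: base_store_simps)
  show ?thesis
    unfolding clock_stmts_def
    by (rule hoare_seq_append[OF start hoare_seq_append[OF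
          hoare_clock_args[OF assms, of "2 ^ r", unfolded power_add[symmetric]]
          hoare_seq_append[OF copy hoare_squares]]])
qed

lemma assigned_vars_clock:
  "assigned_vars_seq (clock_stmts r n d) \<subseteq> {''W'', ''y'', ''z'', ''i'', ''k''}"
  by (auto simp: clock_stmts_def clock_arg_stmts_def square_stmts_def)

lemma funpow_square_bound: "((E::nat) + 1) ^ Suc d \<le> ((\<lambda>E. (E + 1)\<^sup>2) ^^ d) E + 1"
proof (induction d)
  case (Suc d)
  have "(E + 1) ^ Suc (Suc d) \<le> (E + 1) ^ (Suc d * 2)"
    using power_increasing[of "Suc (Suc d)" "Suc d * 2" "E + 1"] by simp
  also have "\<dots> = ((E + 1) ^ Suc d)\<^sup>2"
    by (rule power_mult)
  also have "\<dots> \<le> (((\<lambda>E. (E + 1)\<^sup>2) ^^ d) E + 1)\<^sup>2"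
    using Suc.IH by (rule power_mono) simp
  finally show ?case by simp
qed simp

section \<open>Reading the output off the simulated tape\<close>

text \<open>The loop over \<open>size(z)\<close>, \<open>z = R\<close>, runs at least once per output digit; at the blank
  (digit \<open>0\<close>) ending the output the body stops changing the store.\<close>

definition decode_digit_stmt :: "nat \<Rightarrow> stmt" where
  "decode_digit_stmt B = If (eNeq (eMod (Var ''R'') (NumLit B)) (NumLit 0))
     (Block
       [Assign ''A'' (eAdd (eAdd (Var ''A'') (Var ''A'')) (eSub (eMod (Var ''R'') (NumLit B)) (NumLit 1))),
        Assign ''R'' (eDiv (Var ''R'') (NumLit B))])
     (Block [])"

lemma exec_decode_digit:
  assumes "0 < B" "\<Sigma> ''R'' = Some (VInt Y)" "0 \<le> Y" "\<Sigma> ''A'' = Some (VInt a)"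
  shows "exec_fun \<Sigma> (decode_digit_stmt B) = Some (if Y mod int B = 0 then \<Sigma>
    else \<Sigma>(''A'' \<mapsto> VInt (2 * a + (Y mod int B - 1)), ''R'' \<mapsto> VInt (Y div int B)))"
  using assms by (simp add: decode_digit_stmt_def int_bin_def cmod_nonneg cdiv_nonneg domIff)

lemma hoare_decode_loop:
  assumes B: "2 \<le> B" and X: "0 \<le> X" and xs: "set xs \<subseteq> {1, 2}" "xs \<noteq> []"
    and digits: "\<forall>k < length xs. digit (int B) X k = int (xs ! k)" "digit (int B) X (length xs) = 0"
  shows "hoare (\<lambda>\<Sigma>. \<Sigma> ''R'' = Some (VInt X) \<and> \<Sigma> ''z'' = Some (VInt X) \<and> \<Sigma> ''A'' = Some (VInt 0))
    (For ''i'' (Var ''z'') (decode_digit_stmt B)) (\<lambda>\<Sigma>. \<Sigma> ''A'' = Some (VInt (bits_value xs)))"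
proof -
  define n where "n = length xs"
  define I where "I k \<Sigma> \<longleftrightarrow> \<Sigma> ''R'' = Some (VInt (X div int B ^ min k n)) \<and>
      \<Sigma> ''A'' = Some (VInt (bits_value (take (min k n) xs)))" for k \<Sigma>
  have "xs ! (n - 1) \<in> {1, 2}" using xs unfolding n_def by (simp add: subset_iff)
  then have "digit (int B) X (n - 1) \<noteq> 0" using digits(1) xs(2) unfolding n_def by auto
  then have long: "n \<le> floorlog 2 (nat \<bar>X\<bar>)"
    using digit_nonzero_less_floorlog[OF B X] X by fastforce
  have "hoare (\<lambda>\<Sigma>. \<Sigma> ''R'' = Some (VInt X) \<and> \<Sigma> ''z'' = Some (VInt X) \<and> \<Sigma> ''A'' = Some (VInt 0))
    (For ''i'' (Var ''z'') (decode_digit_stmt B)) (I (floorlog 2 (nat \<bar>X\<bar>)))"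
  proof (rule hoare_For)
    fix k \<Sigma> j assume I: "I k \<Sigma>"
    define Y where "Y = X div int B ^ min k n"
    have "Y div int B = X div (int B ^ min k n * int B)"
      using B by (simp add: Y_def zdiv_zmult2_eq)
    then have Y: "0 \<le> Y" "Y mod int B = digit (int B) X (min k n)"
      "Y div int B = X div int B ^ Suc (min k n)"
      using X B by (simp_all add: Y_def digit_def pos_imp_zdiv_nonneg_iff mult.commute)
    have "I (Suc k) (if Y mod int B = 0 then \<Sigma>(''i'' \<mapsto> VInt j) else \<Sigma>(''i'' \<mapsto> VInt j,
        ''A'' \<mapsto> VInt (2 * bits_value (take (min k n) xs) + (Y mod int B - 1)),
        ''R'' \<mapsto> VInt (Y div int B)))"
    proof (cases "k < n")
      case True
      then have "xs ! k \<in> {1, 2}" using xs(1) unfolding n_def by (simp add: subset_iff)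
      moreover have "take (Suc k) xs = take k xs @ [xs ! k]"
        using True unfolding n_def by (simp add: take_Suc_conv_app_nth)
      ultimately show ?thesis
        using I True Y digits(1) unfolding I_def n_def by (auto simp: bits_value_snoc)
    qed (use I Y digits(2) in \<open>auto simp: I_def n_def\<close>)
    moreover have "exec_fun (\<Sigma>(''i'' \<mapsto> VInt j)) (decode_digit_stmt B) = Some (if Y mod int B = 0
      then \<Sigma>(''i'' \<mapsto> VInt j) else \<Sigma>(''i'' \<mapsto> VInt j,
        ''A'' \<mapsto> VInt (2 * bits_value (take (min k n) xs) + (Y mod int B - 1)),
        ''R'' \<mapsto> VInt (Y div int B)))"
      using I B Y(1) by (intro exec_decode_digit) (auto simp: I_def Y_def)
    ultimately show "\<exists>\<Sigma>'. exec (\<Sigma>(''i'' \<mapsto> VInt j)) (decode_digit_stmt B) \<Sigma>' \<and> I (Suc k) \<Sigma>'"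
      by (blast intro: exec_if_exec_fun(1))
  qed (auto simp: I_def bits_value_def)
  then show ?thesis
    by (rule hoare_conseq) (use long in \<open>auto simp: I_def n_def min_absorb2\<close>)
qed

definition strip_sign_stmts :: "nat \<Rightarrow> stmt list" where
  "strip_sign_stmts B =
     [Assign ''g'' FalseLit,
      If (eEq (eMod (Var ''R'') (NumLit B)) (NumLit 3))
        (Block [Assign ''g'' TrueLit, Assign ''R'' (eDiv (Var ''R'') (NumLit B))]) (Block []),
      Assign ''z'' (Var ''R''),
      Assign ''A'' (NumLit 0)]"

lemma hoare_strip_sign:
  assumes "0 < B" "0 \<le> R0" "neg \<longleftrightarrow> R0 mod int B = 3" "X = (if neg then R0 div int B else R0)"
  shows "hoare_seq (\<lambda>\<Sigma>. base_store vs \<Sigma> \<and> \<Sigma> ''R'' = Some (VInt R0)) (strip_sign_stmts B)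
    (\<lambda>\<Sigma>. (\<Sigma> ''R'' = Some (VInt X) \<and> \<Sigma> ''z'' = Some (VInt X) \<and> \<Sigma> ''A'' = Some (VInt 0)) \<and>
      \<Sigma> ''g'' = Some (VBool neg))"
  by (rule hoare_seq_by_exec_seq_fun) (use assms in \<open>auto simp: strip_sign_stmts_def int_bin_def
      cmod_nonneg cdiv_nonneg base_store_simps\<close>)

definition decode_stmts :: "nat \<Rightarrow> stmt list" where
  "decode_stmts B = strip_sign_stmts B @ For ''i'' (Var ''z'') (decode_digit_stmt B) #
     [If (Var ''g'') (Assign ''A'' (eSub (NumLit 0) (Var ''A''))) (Block [])]"

lemma hoare_decode:
  assumes B: "4 \<le> B" and R0: "0 \<le> R0"
    and out: "\<forall>k < length (enc_int v). digit (int B) R0 k = int (enc_int v ! k)"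
      "digit (int B) R0 (length (enc_int v)) = 0"
  shows "hoare_seq (\<lambda>\<Sigma>. base_store vs \<Sigma> \<and> \<Sigma> ''R'' = Some (VInt R0)) (decode_stmts B)
    (\<lambda>\<Sigma>. \<Sigma> ''A'' = Some (VInt v))"
proof -
  define xs where "xs = bits (nat \<bar>v\<bar>)"
  define X where "X = (if v < 0 then R0 div int B else R0)"
  have xs: "set xs \<subseteq> {1, 2}" "xs \<noteq> []" using bits_digits bits_not_Nil by (auto simp: xs_def)
  have enc: "enc_int v = (if v < 0 then 3 # xs else xs)" by (simp add: enc_int_def xs_def)
  have X: "0 \<le> X" using R0 B by (simp add: X_def pos_imp_zdiv_nonneg_iff)
  have digits_X: "digit (int B) X k = digit (int B) R0 (if v < 0 then Suc k else k)" for k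
    using B by (simp add: X_def digit_Suc)
  have "0 < length (enc_int v)" using enc xs(2) by auto
  then have "R0 mod int B = int (enc_int v ! 0)" using out(1) by (metis digit_0)
  moreover have "xs ! 0 \<in> {1, 2}" using xs by (simp add: subset_iff)
  ultimately have sign: "(R0 mod int B = 3) = (v < 0)" using enc by auto
  have loop: "hoare
    (\<lambda>\<Sigma>. (\<Sigma> ''R'' = Some (VInt X) \<and> \<Sigma> ''z'' = Some (VInt X) \<and> \<Sigma> ''A'' = Some (VInt 0)) \<and>
      \<Sigma> ''g'' = Some (VBool (v < 0)))
    (For ''i'' (Var ''z'') (decode_digit_stmt B))
    (\<lambda>\<Sigma>. \<Sigma> ''A'' = Some (VInt (bits_value xs)) \<and> \<Sigma> ''g'' = Some (VBool (v < 0)))"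
  proof (rule hoare_frame[OF hoare_decode_loop])
    show "\<forall>k < length xs. digit (int B) X k = int (xs ! k)"
      using out(1) enc digits_X by (cases "v < 0") auto
    show "digit (int B) X (length xs) = 0"
      using out(2) enc digits_X by (cases "v < 0") auto
    show "preserved_outside (assigned_vars (For ''i'' (Var ''z'') (decode_digit_stmt B)))
      (\<lambda>\<Sigma>. \<Sigma> ''g'' = Some (VBool (v < 0)))"
      by (rule preserved_outside_var_eq) (simp add: decode_digit_stmt_def)
  qed (use B X xs in auto)
  have finish: "hoare (\<lambda>\<Sigma>. \<Sigma> ''A'' = Some (VInt (bits_value xs)) \<and> \<Sigma> ''g'' = Some (VBool (v < 0)))
    (If (Var ''g'') (Assign ''A'' (eSub (NumLit 0) (Var ''A''))) (Block []))
    (\<lambda>\<Sigma>. \<Sigma> ''A'' = Some (VInt v))"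
    by (rule hoare_by_exec_fun) (auto simp: xs_def bits_value_bits int_bin_def domIff)
  show ?thesis
    unfolding decode_stmts_def
    by (rule hoare_seq_append[OF hoare_strip_sign[OF _ R0 sign[symmetric] X_def]
          hoare_seq_Cons[OF loop hoare_seq_single[OF finish]]]) (use B in simp)
qed

lemma hoare_decode_output:
  assumes M: "valid_tm M" and out: "tm_output_is cfg (enc_int v)"
  shows "hoare_seq (\<lambda>\<Sigma>. simulates M cfg \<Sigma> \<and> base_store vs \<Sigma>) (decode_stmts (nsyms M))
    (\<lambda>\<Sigma>. \<Sigma> ''A'' = Some (VInt v))"
  unfolding hoare_seq_def
proof (intro allI impI)
  fix \<Sigma> assume \<Sigma>: "simulates M cfg \<Sigma> \<and> base_store vs \<Sigma>"
  obtain q tp h where cfg: "cfg = (q, tp, h)" by (cases cfg)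
  obtain L R0 where R0: "\<Sigma> ''R'' = Some (VInt R0)" "0 \<le> R0"
    and tape: "tape_repr (int (nsyms M)) tp h L R0"
    using \<Sigma> unfolding simulates_def cfg by auto
  have "digit (int (nsyms M)) R0 k = int (tp (h + int k))" for k
    using tape unfolding tape_repr_def by simp
  then have "\<forall>k < length (enc_int v). digit (int (nsyms M)) R0 k = int (enc_int v ! k)"
    "digit (int (nsyms M)) R0 (length (enc_int v)) = 0"
    using out unfolding tm_output_is_def cfg by auto
  with hoare_decode[OF _ R0(2)]
  show "\<exists>\<Sigma>'. exec_seq \<Sigma> (decode_stmts (nsyms M)) \<Sigma>' \<and> \<Sigma>' ''A'' = Some (VInt v)"
    using valid_tm_nsyms[OF M] \<Sigma> R0(1) unfolding hoare_seq_def by fastforce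
qed


section \<open>Typing the simulating program\<close>

text \<open>A type checker for declaration-free statements, which leave the environment unchanged.\<close>

fun well_typed_stmt :: "tenv \<Rightarrow> bool \<Rightarrow> stmt \<Rightarrow> bool"
  and well_typed_seq :: "tenv \<Rightarrow> bool \<Rightarrow> stmt list \<Rightarrow> bool" where
  "well_typed_stmt \<Gamma> lp (Decl t x) = False"
| "well_typed_stmt \<Gamma> lp (Assign x e) = (case \<Gamma> x of
     Some tx \<Rightarrow> \<not> (lp \<and> tx = TIInt) \<and> (case ty_fun \<Gamma> e of Some t \<Rightarrow> compatible t tx | None \<Rightarrow> False)
   | None \<Rightarrow> False)"
| "well_typed_stmt \<Gamma> lp (Block ss) = well_typed_seq \<Gamma> lp ss"
| "well_typed_stmt \<Gamma> lp (If e s1 s2) =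
     (ty_fun \<Gamma> e = Some TBool \<and> well_typed_stmt \<Gamma> lp s1 \<and> well_typed_stmt \<Gamma> lp s2)"
| "well_typed_stmt \<Gamma> lp (For x e s) =
     (ty_fun \<Gamma> e = Some TIInt \<and> \<Gamma> x = None \<and> well_typed_stmt (\<Gamma>(x \<mapsto> TIInt)) True s)"
| "well_typed_seq \<Gamma> lp [] = True"
| "well_typed_seq \<Gamma> lp (s # ss) = (well_typed_stmt \<Gamma> lp s \<and> well_typed_seq \<Gamma> lp ss)"

lemma stmt_ty_if_well_typed:
  "well_typed_stmt \<Gamma> lp s \<Longrightarrow> stmt_ty \<Gamma> lp s \<Gamma>"
  "well_typed_seq \<Gamma> lp ss \<Longrightarrow> seq_ty \<Gamma> lp ss \<Gamma>"
proof (induction \<Gamma> lp s and \<Gamma> lp ss rule: well_typed_stmt_well_typed_seq.induct)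
  case (2 \<Gamma> lp x e)
  then obtain tx t where "\<Gamma> x = Some tx" "\<not> (lp \<and> tx = TIInt)" "ty_fun \<Gamma> e = Some t" "compatible t tx"
    by (auto split: option.splits)
  then show ?case by (intro sty_assign) (auto intro: has_ty_if_ty_fun)
next
  case (5 \<Gamma> lp x e s)
  then have "has_ty \<Gamma> (App Size [e]) TIInt" by (intro has_ty_if_ty_fun) simp
  moreover have "stmt_ty (\<Gamma>(x \<mapsto> TIInt)) True s (\<Gamma>(x \<mapsto> TIInt))" using 5 by (auto simp: fun_upd_def)
  ultimately show ?case using 5 by (intro sty_for) (auto simp: domIff)
qed (auto intro: stmt_ty_seq_ty.intros has_ty_if_ty_fun)

lemma well_typed_seq_append [simp]:
  "well_typed_seq \<Gamma> lp (xs @ ys) = (well_typed_seq \<Gamma> lp xs \<and> well_typed_seq \<Gamma> lp ys)"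
  by (induction xs) auto

lemma well_typed_seq_concat:
  "(\<And>x. x \<in> set xs \<Longrightarrow> well_typed_seq \<Gamma> lp (f x)) \<Longrightarrow> well_typed_seq \<Gamma> lp (concat (map f xs))"
  by (induction xs) auto

lemma well_typed_seq_concat_replicate:
  "well_typed_seq \<Gamma> lp ss \<Longrightarrow> well_typed_seq \<Gamma> lp (concat (replicate n ss))"
  by (induction n) auto

lemma seq_ty_append:
  "seq_ty \<Gamma> lp xs \<Gamma>' \<Longrightarrow> seq_ty \<Gamma>' lp ys \<Gamma>'' \<Longrightarrow> seq_ty \<Gamma> lp (xs @ ys) \<Gamma>''"
proof (induction xs arbitrary: \<Gamma>)
  case Nil
  then show ?case by (cases rule: seq_ty.cases) auto
next
  case (Cons s xs)
  from Cons.prems(1) obtain \<Gamma>1 where "stmt_ty \<Gamma> lp s \<Gamma>1" "seq_ty \<Gamma>1 lp xs \<Gamma>'"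
    by (cases rule: seq_ty.cases) auto
  then show ?case using Cons by (auto intro: sty_cons)
qed

definition prog_env :: "nat \<Rightarrow> tenv \<Rightarrow> bool" where
  "prog_env m \<Gamma> \<longleftrightarrow>
     \<Gamma> ''R'' = Some TInt \<and> \<Gamma> ''L'' = Some TInt \<and> \<Gamma> ''q'' = Some TInt \<and> \<Gamma> ''N'' = Some TInt \<and>
     \<Gamma> ''W'' = Some TInt \<and> \<Gamma> ''A'' = Some TInt \<and> \<Gamma> ''g'' = Some TBool \<and>
     \<Gamma> ''y'' = Some TIInt \<and> \<Gamma> ''z'' = Some TIInt \<and> \<Gamma> ''i'' = None \<and> \<Gamma> ''k'' = None \<and>
     (\<forall>j < m. \<Gamma> (param_name j) = Some TInt)"

lemma well_typed_simulation_loop: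
  assumes "prog_env m \<Gamma>" "0 < nsyms M"
  shows "well_typed_stmt \<Gamma> False (For ''i'' (Var ''z'') (step_stmt M))"
proof -
  have "well_typed_stmt (\<Gamma>(''i'' \<mapsto> TIInt)) True (action_stmt M q a)" for q a
    using assms unfolding prog_env_def
    by (auto simp: action_stmt_def write_stmts_def move_stmts_def ty_fun_times_const is_int_ty_def
        compatible_def ty_sup_def split: prod.splits)
  then have "well_typed_stmt (\<Gamma>(''i'' \<mapsto> TIInt)) True (dispatch M ps)" for ps
    using assms unfolding prog_env_def
    by (induction ps rule: dispatch.induct) (auto simp: is_int_ty_def ty_sup_def)
  then show ?thesis
    using assms unfolding prog_env_def by (simp add: step_stmt_def is_int_ty_def)
qed

lemma well_typed_encode_input:
  assumes "prog_env m \<Gamma>" "0 < B"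
  shows "well_typed_seq \<Gamma> False (encode_input_stmts B m)"
  unfolding encode_input_stmts_def
proof (rule well_typed_seq_concat)
  fix j assume "j \<in> set (rev [0..<m])"
  then show "well_typed_seq \<Gamma> False (encode_arg_stmts B j)"
    using assms unfolding prog_env_def
    by (simp add: encode_arg_stmts_def start_arg_stmts_def finish_arg_stmts_def push_stmt_def
        push_bits_stmt_def push_bit_stmt_def ty_fun_times_const is_int_ty_def compatible_def
        ty_sup_def)
qed

lemma well_typed_clock:
  assumes "prog_env m \<Gamma>"
  shows "well_typed_seq \<Gamma> False (clock_stmts r m d)"
  using assms unfolding prog_env_def
  by (auto simp: clock_stmts_def clock_arg_stmts_def square_stmts_def double_stmt_def
      is_int_ty_def compatible_def ty_sup_def
      intro!: well_typed_seq_concat well_typed_seq_concat_replicate)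

lemma well_typed_decode:
  assumes "prog_env m \<Gamma>"
  shows "well_typed_seq \<Gamma> False (decode_stmts B)"
  using assms unfolding prog_env_def
  by (simp add: decode_stmts_def strip_sign_stmts_def decode_digit_stmt_def is_int_ty_def
      compatible_def ty_sup_def)


definition decl_stmts :: "stmt list" where
  "decl_stmts = [Decl TInt ''R'', Decl TInt ''L'', Decl TInt ''q'', Decl TInt ''N'', Decl TInt ''W'',
     Decl TInt ''A'', Decl TBool ''g'', Decl TIInt ''y'', Decl TIInt ''z'']"

text \<open>The clock exponent \<open>c + 3 m + sum_bitlen\<close> exceeds both \<open>c\<close> and the length of the encoded
  input, so after \<open>d\<close> squarings the loop over \<open>size(z)\<close> outlasts the running time.\<close>

definition simulator_prog :: "tm \<Rightarrow> nat \<Rightarrow> nat \<Rightarrow> nat \<Rightarrow> prog" where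
  "simulator_prog M c d m = \<lparr>params = map param_name [0..<m],
     body = decl_stmts @ encode_input_stmts (nsyms M) m @ clock_stmts (c + 3 * m) m d @
       For ''i'' (Var ''z'') (step_stmt M) # decode_stmts (nsyms M),
     ret = Var ''A''\<rparr>"

lemma distinct_params: "distinct (map param_name [0..<m])"
  using param_name_inj by (simp add: distinct_map inj_on_def)

lemma map_of_params_param:
  "length ys = m \<Longrightarrow> j < m \<Longrightarrow> map_of (zip (map param_name [0..<m]) ys) (param_name j) = Some (ys ! j)"
  using map_of_zip_nth[of "map param_name [0..<m]" ys j] distinct_params by simp

lemma map_of_params_other:
  "x \<notin> range param_name \<Longrightarrow> map_of (zip (map param_name [0..<m]) ys) x = None"
  by (auto simp: map_of_eq_None_iff dest!: set_zip_leftD)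

lemma well_typed_simulator_prog:
  assumes "0 < nsyms M"
  shows "well_typed (simulator_prog M c d m)"
proof -
  define \<Gamma>0 where "\<Gamma>0 = map_of (zip (map param_name [0..<m]) (replicate m TInt))"
  define \<Gamma> where "\<Gamma> = \<Gamma>0(''R'' \<mapsto> TInt, ''L'' \<mapsto> TInt, ''q'' \<mapsto> TInt, ''N'' \<mapsto> TInt, ''W'' \<mapsto> TInt,
     ''A'' \<mapsto> TInt, ''g'' \<mapsto> TBool, ''y'' \<mapsto> TIInt, ''z'' \<mapsto> TIInt)"
  have fresh: "\<Gamma>0 x = None" if "x \<notin> range param_name" for x
    using that unfolding \<Gamma>0_def by (rule map_of_params_other)
  have env: "prog_env m \<Gamma>"
    using map_of_params_param[of "replicate m TInt" m] fresh
    unfolding prog_env_def \<Gamma>_def \<Gamma>0_def by simp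
  then have "seq_ty \<Gamma> False (encode_input_stmts (nsyms M) m @ clock_stmts (c + 3 * m) m d @
      For ''i'' (Var ''z'') (step_stmt M) # decode_stmts (nsyms M)) \<Gamma>"
    using assms well_typed_simulation_loop[OF env assms] by (intro stmt_ty_if_well_typed(2))
      (simp add: well_typed_encode_input well_typed_clock well_typed_decode)
  moreover have "seq_ty \<Gamma>0 False decl_stmts \<Gamma>"
    unfolding decl_stmts_def \<Gamma>_def
    by ((rule sty_cons, rule sty_decl, simp add: fresh domIff, simp)+, rule sty_nil)
  ultimately have "seq_ty \<Gamma>0 False (body (simulator_prog M c d m)) \<Gamma>"
    by (auto simp: simulator_prog_def intro: seq_ty_append)
  moreover have "has_ty \<Gamma> (Var ''A'') TInt" by (rule ty_var) (simp add: \<Gamma>_def)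
  ultimately show ?thesis
    using distinct_params by (auto simp: well_typed_def simulator_prog_def \<Gamma>0_def is_int_ty_def)
qed

lemma hoare_decl_stmts:
  assumes "length vs = m"
  shows "hoare_seq (\<lambda>\<Sigma>. \<Sigma> = map_of (zip (map param_name [0..<m]) (map VInt vs))) decl_stmts
    (\<lambda>\<Sigma>. base_store vs \<Sigma> \<and> \<Sigma> ''R'' = Some (VInt 0) \<and> \<Sigma> ''L'' = Some (VInt 0) \<and>
      \<Sigma> ''q'' = Some (VInt 0))"
  by (rule hoare_seq_by_exec_seq_fun)
    (use assms map_of_params_param[of "map VInt vs" m] in
      \<open>simp add: decl_stmts_def base_store_def work_vars_def\<close>)

lemma hoare_setup:
  assumes M: "valid_tm M" and len: "length vs = m"
  shows "hoare_seq (\<lambda>\<Sigma>. \<Sigma> = map_of (zip (map param_name [0..<m]) (map VInt vs)))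
    (decl_stmts @ encode_input_stmts (nsyms M) m @ clock_stmts r m d)
    (\<lambda>\<Sigma>. (base_store vs \<Sigma> \<and>
        \<Sigma> ''z'' = Some (VInt (2 ^ ((\<lambda>E. (E + 1)\<^sup>2) ^^ d) (r + sum_bitlen vs m)))) \<and>
      simulates M (init_config (enc_input vs)) \<Sigma>)"
proof -
  define w where "w = from_digits (int (nsyms M)) (enc_input vs)"
  define G where "G \<Sigma> \<longleftrightarrow> \<Sigma> ''L'' = Some (VInt 0) \<and> \<Sigma> ''q'' = Some (VInt 0)" for \<Sigma>
  have B: "0 < nsyms M" using valid_tm_nsyms[OF M] by simp
  have G: "preserved_outside X G" if "''L'' \<notin> X" "''q'' \<notin> X" for X
    unfolding G_def using that by (intro preserved_outside_conj preserved_outside_var_eq)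
  have decls: "hoare_seq (\<lambda>\<Sigma>. \<Sigma> = map_of (zip (map param_name [0..<m]) (map VInt vs))) decl_stmts
    (\<lambda>\<Sigma>. (base_store vs \<Sigma> \<and>
      \<Sigma> ''R'' = Some (VInt (from_digits (int (nsyms M)) (enc_input (drop m vs))))) \<and> G \<Sigma>)"
    using hoare_decl_stmts[OF len] by (rule hoare_seq_conseq) (auto simp: len G_def enc_input_def)
  have encode: "hoare_seq
    (\<lambda>\<Sigma>. (base_store vs \<Sigma> \<and>
      \<Sigma> ''R'' = Some (VInt (from_digits (int (nsyms M)) (enc_input (drop m vs))))) \<and> G \<Sigma>)
    (encode_input_stmts (nsyms M) m)
    (\<lambda>\<Sigma>. (base_store vs \<Sigma> \<and> \<Sigma> ''R'' = Some (VInt w)) \<and> G \<Sigma>)"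
    unfolding w_def
    by (rule hoare_seq_frame[OF hoare_encode_input[OF B] G])
      (use len assigned_vars_encode_input in auto)
  have clock: "hoare_seq (\<lambda>\<Sigma>. (base_store vs \<Sigma> \<and> \<Sigma> ''R'' = Some (VInt w)) \<and> G \<Sigma>)
    (clock_stmts r m d)
    (\<lambda>\<Sigma>. (base_store vs \<Sigma> \<and>
        \<Sigma> ''z'' = Some (VInt (2 ^ ((\<lambda>E. (E + 1)\<^sup>2) ^^ d) (r + sum_bitlen vs m)))) \<and>
      \<Sigma> ''R'' = Some (VInt w) \<and> G \<Sigma>)"
  proof (rule hoare_seq_conseq)
    show "hoare_seq (\<lambda>\<Sigma>. base_store vs \<Sigma> \<and> \<Sigma> ''R'' = Some (VInt w) \<and> G \<Sigma>) (clock_stmts r m d)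
      (\<lambda>\<Sigma>. (base_store vs \<Sigma> \<and>
          \<Sigma> ''z'' = Some (VInt (2 ^ ((\<lambda>E. (E + 1)\<^sup>2) ^^ d) (r + sum_bitlen vs m)))) \<and>
        \<Sigma> ''R'' = Some (VInt w) \<and> G \<Sigma>)"
      using assigned_vars_clock[of r m d]
      by (intro hoare_seq_frame hoare_clock preserved_outside_conj preserved_outside_var_eq G)
        (auto simp: len)
  qed auto
  have "\<forall>a \<in> set (enc_input vs). a < nsyms M"
    using enc_input_symbols valid_tm_nsyms[OF M] by fastforce
  then have "simulates M (init_config (enc_input vs)) \<Sigma>" if "\<Sigma> ''R'' = Some (VInt w) \<and> G \<Sigma>" for \<Sigma>
    using that simulates_init_config[OF M] by (simp add: G_def w_def)
  moreover note hoare_seq_append[OF decls hoare_seq_append[OF encode clock]]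
  ultimately show ?thesis
    by (elim hoare_seq_conseq) auto
qed

lemma running_time_le_clock:
  assumes "length vs = m" "t \<le> c * (length (enc_input vs) + 1) ^ d"
  shows "t \<le> Suc (((\<lambda>E. (E + 1)\<^sup>2) ^^ d) (c + 3 * m + sum_bitlen vs m))"
proof -
  define E0 where "E0 = c + 3 * m + sum_bitlen vs m"
  have "length (enc_input vs) + 1 \<le> E0 + 1" "c \<le> E0 + 1"
    using length_enc_input[of vs] assms(1) by (auto simp: E0_def)
  then have "c * (length (enc_input vs) + 1) ^ d \<le> (E0 + 1) * (E0 + 1) ^ d"
    by (intro mult_le_mono power_mono) auto
  with assms(2) have "t \<le> (E0 + 1) ^ Suc d" by simp
  also have "\<dots> \<le> Suc (((\<lambda>E. (E + 1)\<^sup>2) ^^ d) E0)" using funpow_square_bound[of E0 d] by simp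
  finally show ?thesis unfolding E0_def .
qed

lemma simulator_prog_runs:
  assumes M: "valid_tm M" and len: "length vs = m"
    and t: "t \<le> c * (length (enc_input vs) + 1) ^ d"
    and out: "tm_output_is (tm_run M t (init_config (enc_input vs))) (enc_int v)"
  shows "\<exists>\<Sigma>'. exec_seq (map_of (zip (params (simulator_prog M c d m)) (map VInt vs)))
    (body (simulator_prog M c d m)) \<Sigma>' \<and> \<Sigma>' ''A'' = Some (VInt v)"
proof -
  define c0 where "c0 = init_config (enc_input vs)"
  define E where "E = ((\<lambda>E. (E + 1)\<^sup>2) ^^ d) (c + 3 * m + sum_bitlen vs m)"
  have "t \<le> floorlog 2 (nat \<bar>2 ^ E\<bar>)"
    using running_time_le_clock[OF len t] by (simp add: E_def nat_power_eq floorlog_2_power)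
  with out have halted: "tm_run M (floorlog 2 (nat \<bar>2 ^ E\<bar>)) c0 = tm_run M t c0"
    by (intro tm_run_halted) (auto simp: c0_def tm_output_is_def split: prod.splits)
  have "assigned_vars (For ''i'' (Var ''z'') (step_stmt M)) \<inter> range param_name = {}"
    using assigned_vars_step_stmt[of M] by (intro disjoint_param_names) auto
  from hoare_frame[OF hoare_simulation_loop[OF M, of c0 "2 ^ E"]
      preserved_outside_base_store[OF this]]
  have loop: "hoare (\<lambda>\<Sigma>. (base_store vs \<Sigma> \<and>
      \<Sigma> ''z'' = Some (VInt (2 ^ ((\<lambda>E. (E + 1)\<^sup>2) ^^ d) (c + 3 * m + sum_bitlen vs m)))) \<and>
      simulates M c0 \<Sigma>)
    (For ''i'' (Var ''z'') (step_stmt M))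
    (\<lambda>\<Sigma>. simulates M (tm_run M t c0) \<Sigma> \<and> base_store vs \<Sigma>)"
  proof (rule hoare_conseq)
    fix \<Sigma> assume "simulates M (tm_run M (floorlog 2 (nat \<bar>2 ^ E\<bar>)) c0) \<Sigma> \<and> base_store vs \<Sigma>"
    then show "simulates M (tm_run M t c0) \<Sigma> \<and> base_store vs \<Sigma>"
      unfolding halted .
  qed (auto simp: E_def)
  have "body (simulator_prog M c d m) =
    (decl_stmts @ encode_input_stmts (nsyms M) m @ clock_stmts (c + 3 * m) m d) @
    For ''i'' (Var ''z'') (step_stmt M) # decode_stmts (nsyms M)"
    by (simp add: simulator_prog_def)
  then have "hoare_seq (\<lambda>\<Sigma>. \<Sigma> = map_of (zip (map param_name [0..<m]) (map VInt vs)))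
    (body (simulator_prog M c d m)) (\<lambda>\<Sigma>. \<Sigma> ''A'' = Some (VInt v))"
    using hoare_seq_append[OF hoare_setup[OF M len] hoare_seq_Cons[OF loop[unfolded c0_def]
        hoare_decode_output[OF M out]]]
    by simp
  then show ?thesis by (auto simp: hoare_seq_def simulator_prog_def)
qed

theorem theorem4:
  fixes m :: nat and f :: "int list \<Rightarrow> int"
  assumes "in_FP m f"
  shows "in_FPC m f"
proof -
  obtain M c d where M: "valid_tm M" and runs: "\<forall>vs. length vs = m \<longrightarrow>
      (\<exists>t. t \<le> c * (length (enc_input vs) + 1) ^ d \<and>
        tm_output_is (tm_run M t (init_config (enc_input vs))) (enc_int (f vs)))"
    using assms unfolding in_FP_def by blast
  have "well_typed (simulator_prog M c d m)"
    using valid_tm_nsyms[OF M] by (intro well_typed_simulator_prog) simp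
  moreover have "prog_computes (simulator_prog M c d m) m f"
  proof (rule prog_computes_if_runs)
    fix vs :: "int list" assume "length vs = m"
    with runs show "\<exists>\<Sigma>'. exec_seq (map_of (zip (params (simulator_prog M c d m)) (map VInt vs)))
        (body (simulator_prog M c d m)) \<Sigma>' \<and> \<Sigma>' ''A'' = Some (VInt (f vs))"
      using simulator_prog_runs[OF M] by blast
  qed (simp_all add: simulator_prog_def)
  ultimately show ?thesis unfolding in_FPC_def by blast
qed

end
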